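(* Let $s\in\mathbb N$. There exist positive constants $A_s,B_s$ depending on $s$ such that for every $N\ge1$ and every $r\ge2$, if $\boldsymbol k_1,\dots,\boldsymbol k_r$ are sampled independently from the uniform distribution on $Q_N$, then $$\Pr\big(\oplus_{i=1}^r\boldsymbol k_i\in Q_N\big)\le A_s^rN^{r/4}r^{-B_s\sqrt N}.$$
   Context: For $k\in\mathbb N_0$, $k=\sum_{\ell\ge1}a_\ell2^{\ell-1}$ with $a_\ell\in\{0,1\}$, let $\kappa=\{\ell:a_\ell=1\}$. For $\boldsymbol k\in\mathbb N_0^s$ with digit sets $\kappa_1,\dots,\kappa_s$, $\|\boldsymbol\kappa\|_1=\sum_j\sum_{\ell\in\kappa_j}\ell$; $Q_N=\{\boldsymbol k\in\mathbb N_0^s\setminus\{\boldsymbol0\}:\|\boldsymbol\kappa\|_1\le N\}$. $\boldsymbol k_1\oplus\boldsymbol k_2$ is the componentwise bitwise XOR (each component's digit set is the symmetric difference of the corresponding digit sets), and $\oplus_{i=1}^r\boldsymbol k_i$ is the iterated sum. *)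

theory Defs
  imports Complex_Main "HOL-Library.FuncSet"
begin

text \<open>Digit set of k: kappa = {l >= 1. a_l = 1} where k = sum a_l 2^(l-1).\<close>
definition digit_set :: "nat \<Rightarrow> nat set" where
  "digit_set k = {l. 1 \<le> l \<and> bit k (l - 1)}"

text \<open>Vectors in N_0^s are lists of length s.  ||kappa||_1.\<close>
definition dnorm :: "nat list \<Rightarrow> nat" where
  "dnorm ks = (\<Sum>j<length ks. \<Sum>l\<in>digit_set (ks ! j). l)"

definition QN :: "nat \<Rightarrow> nat \<Rightarrow> nat list set" where
  "QN s N = {ks. length ks = s \<and> ks \<noteq> replicate s 0 \<and> dnorm ks \<le> N}"

text \<open>Componentwise bitwise XOR (digit sets: symmetric difference).\<close>
definition vxor :: "nat list \<Rightarrow> nat list \<Rightarrow> nat list" where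
  "vxor xs ys = map2 (\<lambda>a b. Bit_Operations.xor a b) xs ys"

definition xsum :: "nat \<Rightarrow> (nat \<Rightarrow> nat list) \<Rightarrow> nat \<Rightarrow> nat list" where
  "xsum s ks r = fold (\<lambda>i acc. vxor acc (ks i)) [0..<r] (replicate s 0)"

definition xor_prob :: "nat \<Rightarrow> nat \<Rightarrow> nat \<Rightarrow> real" where
  "xor_prob s N r =
     real (card {ks \<in> PiE {..<r} (\<lambda>_. QN s N). xsum s ks r \<in> QN s N})
     / real (card (QN s N)) ^ r"

end

theory Submission
  imports Defs "HOL-Real_Asymp.Real_Asymp"
begin

text \<open>Encode a vector by the set of cells \<open>(j, l)\<close> with \<open>l\<close> a binary digit of its \<open>j\<close>-th
  component: XOR becomes symmetric difference, \<open>Q_N\<close> the nonempty cell sets of total height at most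
  \<open>N\<close>, and the probability an \<open>r\<close>-fold convolution of the indicator of \<open>Q_N\<close> divided by
  \<open>|Q_N| ^ r\<close>. Rankin's trick replaces the height constraint by weights \<open>x ^ height\<close> and
  \<open>y ^ height\<close>; then \<open>m \<le> r\<close> convolution steps factor over the cells, while a second moment
  argument for the \<open>x\<close>-tilted product measure, with mean height \<open>N - c N ^ (3 / 4)\<close>, bounds
  \<open>|Q_N|\<close> from below. What remains is a product over levels \<open>l\<close> of factors \<open>1 - gain\<close>. For
  bounded \<open>r\<close> one takes \<open>m = r\<close>, \<open>y = exp (- beta / sqrt N)\<close> and expands to second order in
  \<open>beta\<close>; for large \<open>r\<close> one takes \<open>m = min r (N ^ (1 / 8))\<close>, \<open>y = exp (- 1 / sqrt N)\<close> and
  uses that about \<open>ln m * sqrt N\<close> levels have gain at least \<open>1 / 8\<close>.\<close>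

section \<open>Vectors as finite sets of cells\<close>

lemma bit_nat_imp_less: "bit (k::nat) i \<Longrightarrow> i < k"
proof (rule ccontr)
  assume "bit k i" and "\<not> i < k"
  then have "k < 2 ^ i"
    using less_exp[of k] power_increasing[of k i "2::nat"] by linarith
  with \<open>bit k i\<close> show False
    by (simp add: bit_iff_odd)
qed

lemma digit_set_subset: "digit_set k \<subseteq> {1..k}"
  using bit_nat_imp_less[of k] by (fastforce simp: digit_set_def)

lemma finite_digit_set [simp]: "finite (digit_set k)"
  using digit_set_subset finite_subset by blast

lemma digit_set_0 [simp]: "digit_set 0 = {}"
  by (simp add: digit_set_def)

lemma digit_set_xor: "digit_set (xor a b) = sym_diff (digit_set a) (digit_set b)"
  by (auto simp: digit_set_def bit_xor_iff)

lemma digit_set_inject: "digit_set a = digit_set b \<longleftrightarrow> a = b"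
proof
  assume "digit_set a = digit_set b"
  then have "Suc n \<in> digit_set a \<longleftrightarrow> Suc n \<in> digit_set b" for n
    by simp
  then show "a = b"
    by (auto simp: digit_set_def bit_eq_iff)
qed simp

lemma digit_set_eq_empty_iff: "digit_set a = {} \<longleftrightarrow> a = 0"
  using digit_set_inject[of a 0] by simp

lemma digit_set_surj: "finite S \<Longrightarrow> S \<subseteq> {1..} \<Longrightarrow> \<exists>k. digit_set k = S"
proof (induction S rule: finite_induct)
  case empty
  show ?case
    using digit_set_eq_empty_iff by blast
next
  case (insert l S)
  then obtain k where "digit_set k = S"
    by auto
  then have "digit_set (set_bit (l - 1) k) = insert l S"
    using insert.prems by (auto simp: digit_set_def bit_set_bit_iff)
  then show ?case ..
qed

text \<open>A vector \<open>v\<close> is identified with the set of cells \<open>(j, l)\<close> such that \<open>l\<close> is a digit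
  of its \<open>j\<close>-th component; \<open>dnorm\<close> becomes the total height of the cells.\<close>

definition cell_set :: "nat list \<Rightarrow> (nat \<times> nat) set" where
  "cell_set v = Sigma {..<length v} (\<lambda>j. digit_set (v ! j))"

definition weight :: "(nat \<times> nat) set \<Rightarrow> nat" where
  "weight D = (\<Sum>u\<in>D. snd u)"

definition cells :: "nat \<Rightarrow> nat \<Rightarrow> (nat \<times> nat) set" where
  "cells s N = {..<s} \<times> {1..N}"

definition QN_sets :: "nat \<Rightarrow> nat \<Rightarrow> (nat \<times> nat) set set" where
  "QN_sets s N = {D. D \<subseteq> cells s N \<and> D \<noteq> {} \<and> weight D \<le> N}"

lemma finite_cell_set [simp]: "finite (cell_set v)"
  by (simp add: cell_set_def)

lemma finite_cells [simp]: "finite (cells s N)"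
  by (simp add: cells_def)

lemma finite_QN_sets [simp]: "finite (QN_sets s N)"
  by (rule finite_subset[of _ "Pow (cells s N)"]) (auto simp: QN_sets_def)

lemma QN_sets_subset_cells: "D \<in> QN_sets s N \<Longrightarrow> D \<subseteq> cells s N"
  by (simp add: QN_sets_def)

lemma dnorm_eq_weight: "dnorm v = weight (cell_set v)"
  by (simp add: dnorm_def weight_def cell_set_def sum.Sigma split_beta)

lemma weight_insert: "finite D \<Longrightarrow> u \<notin> D \<Longrightarrow> weight (insert u D) = snd u + weight D"
  by (simp add: weight_def)

lemma power_weight: "finite D \<Longrightarrow> x ^ weight D = (\<Prod>u\<in>D. x ^ snd u)"
  unfolding weight_def by (rule power_sum)

lemma cell_set_vxor:
  "length v = length w \<Longrightarrow> cell_set (vxor v w) = sym_diff (cell_set v) (cell_set w)"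
  by (auto simp: cell_set_def vxor_def digit_set_xor)

lemma cell_set_eq_empty_iff: "cell_set v = {} \<longleftrightarrow> v = replicate (length v) 0"
proof -
  have "cell_set v = {} \<longleftrightarrow> (\<forall>j<length v. digit_set (v ! j) = {})"
    by (auto simp: cell_set_def)
  then show ?thesis
    by (simp add: digit_set_eq_empty_iff list_eq_iff_nth_eq)
qed

lemma cell_set_inject:
  assumes "length v = length w" and "cell_set v = cell_set w"
  shows "v = w"
proof (rule nth_equalityI)
  fix j assume "j < length v"
  then have "l \<in> digit_set (v ! j) \<longleftrightarrow> l \<in> digit_set (w ! j)" for l
    using assms by (auto simp: cell_set_def set_eq_iff)
  then show "v ! j = w ! j"
    by (auto simp: digit_set_inject[symmetric])
qed (fact assms(1))

lemma cell_set_surj: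
  assumes "finite D" and "D \<subseteq> {..<s} \<times> {1..}"
  shows "\<exists>v. length v = s \<and> cell_set v = D"
proof -
  have "\<exists>k. digit_set k = {l. (j, l) \<in> D}" for j
  proof (rule digit_set_surj)
    show "finite {l. (j, l) \<in> D}"
      using finite_imageI[OF assms(1), of snd] by (rule finite_subset[rotated]) force
  qed (use assms(2) in auto)
  then obtain f where f: "\<And>j. digit_set (f j) = {l. (j, l) \<in> D}"
    by metis
  have "cell_set (map f [0..<s]) = D"
    using assms(2) by (auto simp: cell_set_def f)
  then show ?thesis
    by (intro exI[of _ "map f [0..<s]"]) simp
qed

lemma weight_le_imp_subset_cells:
  assumes "finite D" and "D \<subseteq> {..<s} \<times> {1..}" and "weight D \<le> N"
  shows "D \<subseteq> cells s N"
proof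
  fix u assume "u \<in> D"
  then have "snd u \<le> weight D"
    using assms(1) by (auto simp: weight_def intro: member_le_sum)
  then show "u \<in> cells s N"
    using assms \<open>u \<in> D\<close> by (force simp: cells_def)
qed

lemma mem_QN_iff: "v \<in> QN s N \<longleftrightarrow> length v = s \<and> cell_set v \<in> QN_sets s N"
proof -
  have "cell_set v \<subseteq> {..<length v} \<times> {1..}"
    by (auto simp: cell_set_def digit_set_def)
  then show ?thesis
    using weight_le_imp_subset_cells[of "cell_set v" "length v" N]
    by (auto simp: QN_def QN_sets_def dnorm_eq_weight cell_set_eq_empty_iff)
qed

lemma bij_betw_cell_set: "bij_betw cell_set (QN s N) (QN_sets s N)"
proof (rule bij_betw_imageI)
  show "inj_on cell_set (QN s N)"
    by (rule inj_onI) (auto simp: mem_QN_iff intro: cell_set_inject)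
  have "D \<in> cell_set ` QN s N" if "D \<in> QN_sets s N" for D
  proof -
    have "finite D" and "D \<subseteq> {..<s} \<times> {1..}"
      using that finite_subset[of D "cells s N"] by (auto simp: QN_sets_def cells_def)
    then obtain v where "length v = s" "cell_set v = D"
      using cell_set_surj by blast
    then show ?thesis
      using that mem_QN_iff by blast
  qed
  then show "cell_set ` QN s N = QN_sets s N"
    using mem_QN_iff by blast
qed

lemma finite_QN: "finite (QN s N)"
  using bij_betw_finite[OF bij_betw_cell_set] by simp

lemma card_QN: "card (QN s N) = card (QN_sets s N)"
  using bij_betw_same_card[OF bij_betw_cell_set] .

section \<open>The probability as an iterated convolution\<close>

definition QN_conv :: "nat \<Rightarrow> nat \<Rightarrow> ((nat \<times> nat) set \<Rightarrow> real) \<Rightarrow> (nat \<times> nat) set \<Rightarrow> real" where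
  "QN_conv s N \<phi> D = (\<Sum>E\<in>QN_sets s N. \<phi> (sym_diff D E))"

lemma sum_PiE_lessThan_Suc:
  assumes "finite A"
  shows "(\<Sum>f\<in>PiE {..<Suc r} (\<lambda>_. A). F f) = (\<Sum>g\<in>PiE {..<r} (\<lambda>_. A). \<Sum>a\<in>A. F (g(r := a)))"
proof -
  have "(\<Sum>f\<in>PiE {..<Suc r} (\<lambda>_. A). F f) = (\<Sum>(a, g)\<in>A \<times> PiE {..<r} (\<lambda>_. A). F (g(r := a)))"
    unfolding lessThan_Suc PiE_insert_eq
    by (subst sum.reindex[OF inj_combinator]) (simp_all add: case_prod_unfold)
  also have "\<dots> = (\<Sum>a\<in>A. \<Sum>g\<in>PiE {..<r} (\<lambda>_. A). F (g(r := a)))"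
    by (simp only: sum.cartesian_product)
  also have "\<dots> = (\<Sum>g\<in>PiE {..<r} (\<lambda>_. A). \<Sum>a\<in>A. F (g(r := a)))"
    by (rule sum.swap)
  finally show ?thesis .
qed

lemma xsum_Suc: "xsum s ks (Suc r) = vxor (xsum s ks r) (ks r)"
  by (simp add: xsum_def)

lemma xsum_cong: "(\<And>i. i < r \<Longrightarrow> ks i = ks' i) \<Longrightarrow> xsum s ks r = xsum s ks' r"
  unfolding xsum_def by (rule fold_cong) auto

lemma length_xsum: "(\<And>i. i < r \<Longrightarrow> length (ks i) = s) \<Longrightarrow> length (xsum s ks r) = s"
  by (induction r) (simp_all add: xsum_Suc vxor_def xsum_def[of _ _ 0])

lemma length_xsum_QN: "ks \<in> PiE {..<r} (\<lambda>_. QN s N) \<Longrightarrow> length (xsum s ks r) = s"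
  by (rule length_xsum) (simp add: PiE_iff QN_def)

lemma sum_PiE_xsum_eq_QN_conv_power:
  "(\<Sum>ks\<in>PiE {..<r} (\<lambda>_. QN s N). \<phi> (cell_set (xsum s ks r))) = (QN_conv s N ^^ r) \<phi> {}"
proof (induction r arbitrary: \<phi>)
  case 0
  then show ?case
    using cell_set_eq_empty_iff[of "replicate s 0"] by (simp add: xsum_def)
next
  case (Suc r)
  have step: "(\<Sum>a\<in>QN s N. \<phi> (cell_set (xsum s (g(r := a)) (Suc r))))
      = QN_conv s N \<phi> (cell_set (xsum s g r))" if g: "g \<in> PiE {..<r} (\<lambda>_. QN s N)" for g
  proof -
    have "length (xsum s g r) = s"
      using g by (rule length_xsum_QN)
    then have "cell_set (xsum s (g(r := a)) (Suc r)) = sym_diff (cell_set (xsum s g r)) (cell_set a)"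
      if "a \<in> QN s N" for a
      using that xsum_cong[of r "g(r := a)" g s] by (simp add: xsum_Suc cell_set_vxor mem_QN_iff)
    then show ?thesis
      unfolding QN_conv_def
      by (simp add: sum.reindex_bij_betw[OF bij_betw_cell_set, symmetric])
  qed
  have "(\<Sum>ks\<in>PiE {..<Suc r} (\<lambda>_. QN s N). \<phi> (cell_set (xsum s ks (Suc r))))
      = (\<Sum>g\<in>PiE {..<r} (\<lambda>_. QN s N). QN_conv s N \<phi> (cell_set (xsum s g r)))"
    by (simp add: sum_PiE_lessThan_Suc[OF finite_QN] step)
  also have "\<dots> = (QN_conv s N ^^ Suc r) \<phi> {}"
    by (simp add: Suc.IH funpow_Suc_right del: funpow.simps)
  finally show ?case .
qed

lemma xor_prob_eq_QN_conv_power: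
  "xor_prob s N r
     = (QN_conv s N ^^ r) (\<lambda>D. of_bool (D \<in> QN_sets s N)) {} / real (card (QN_sets s N)) ^ r"
proof -
  have "real (card {ks \<in> PiE {..<r} (\<lambda>_. QN s N). xsum s ks r \<in> QN s N})
      = (\<Sum>ks\<in>PiE {..<r} (\<lambda>_. QN s N). of_bool (xsum s ks r \<in> QN s N))"
    by (subst sum_of_bool_eq) (simp_all add: finite_PiE finite_QN Collect_conj_eq Int_commute)
  also have "\<dots> = (\<Sum>ks\<in>PiE {..<r} (\<lambda>_. QN s N). of_bool (cell_set (xsum s ks r) \<in> QN_sets s N))"
    using length_xsum_QN mem_QN_iff by (intro sum.cong) auto
  also have "\<dots> = (QN_conv s N ^^ r) (\<lambda>D. of_bool (D \<in> QN_sets s N)) {}"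
    by (rule sum_PiE_xsum_eq_QN_conv_power)
  finally show ?thesis
    by (simp add: xor_prob_def card_QN)
qed

section \<open>Rankin's trick for the iterated convolution\<close>

lemma QN_conv_mono:
  assumes "\<And>D. D \<subseteq> cells s N \<Longrightarrow> \<phi> D \<le> \<psi> D" and "D \<subseteq> cells s N"
  shows "QN_conv s N \<phi> D \<le> QN_conv s N \<psi> D"
  unfolding QN_conv_def
proof (rule sum_mono)
  fix E assume "E \<in> QN_sets s N"
  then have "sym_diff D E \<subseteq> cells s N"
    using assms(2) QN_sets_subset_cells by blast
  then show "\<phi> (sym_diff D E) \<le> \<psi> (sym_diff D E)"
    using assms(1) by blast
qed

lemma QN_conv_power_bounds:
  assumes "\<And>D. D \<subseteq> cells s N \<Longrightarrow> 0 \<le> \<phi> D \<and> \<phi> D \<le> c" and "D \<subseteq> cells s N"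
  shows "0 \<le> (QN_conv s N ^^ n) \<phi> D \<and> (QN_conv s N ^^ n) \<phi> D \<le> real (card (QN_sets s N)) ^ n * c"
  using assms(2)
proof (induction n arbitrary: D)
  case 0
  then show ?case
    using assms(1) by simp
next
  case (Suc n)
  have "sym_diff D E \<subseteq> cells s N" if "E \<in> QN_sets s N" for E
    using Suc.prems QN_sets_subset_cells[OF that] by blast
  then have bounds: "0 \<le> (QN_conv s N ^^ n) \<phi> (sym_diff D E)
      \<and> (QN_conv s N ^^ n) \<phi> (sym_diff D E) \<le> real (card (QN_sets s N)) ^ n * c"
    if "E \<in> QN_sets s N" for E
    using Suc.IH that by blast
  have "(QN_conv s N ^^ Suc n) \<phi> D = (\<Sum>E\<in>QN_sets s N. (QN_conv s N ^^ n) \<phi> (sym_diff D E))"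
    by (simp add: QN_conv_def)
  moreover have "(\<Sum>E\<in>QN_sets s N. (QN_conv s N ^^ n) \<phi> (sym_diff D E))
      \<le> real (card (QN_sets s N)) * (real (card (QN_sets s N)) ^ n * c)"
    using bounds by (intro sum_bounded_above) auto
  ultimately show ?case
    using bounds by (auto intro: sum_nonneg simp: mult.assoc)
qed

text \<open>Summing over all subsets of cells, with weight \<open>x ^ weight E\<close>, instead of over
  \<open>QN_sets\<close> turns the convolution into a product over cells.\<close>

definition weighted_conv ::
  "nat \<Rightarrow> nat \<Rightarrow> real \<Rightarrow> ((nat \<times> nat) set \<Rightarrow> real) \<Rightarrow> (nat \<times> nat) set \<Rightarrow> real" where
  "weighted_conv s N x \<phi> D = (\<Sum>E\<in>Pow (cells s N). x ^ weight E * \<phi> (sym_diff D E))"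

lemma QN_conv_le_weighted_conv:
  assumes x: "0 < x" "x \<le> 1" and nonneg: "\<And>D. D \<subseteq> cells s N \<Longrightarrow> 0 \<le> \<phi> D"
    and D: "D \<subseteq> cells s N"
  shows "QN_conv s N \<phi> D \<le> weighted_conv s N x \<phi> D / x ^ N"
proof -
  have nonneg': "0 \<le> \<phi> (sym_diff D E)" if "E \<subseteq> cells s N" for E
    using nonneg[of "sym_diff D E"] D that by blast
  have "QN_conv s N \<phi> D \<le> (\<Sum>E\<in>QN_sets s N. x ^ weight E / x ^ N * \<phi> (sym_diff D E))"
    unfolding QN_conv_def
  proof (rule sum_mono)
    fix E assume E: "E \<in> QN_sets s N"
    then have "x ^ N \<le> x ^ weight E"
      using x by (intro power_decreasing) (auto simp: QN_sets_def)
    then have "1 \<le> x ^ weight E / x ^ N"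
      using x by simp
    then show "\<phi> (sym_diff D E) \<le> x ^ weight E / x ^ N * \<phi> (sym_diff D E)"
      using nonneg'[OF QN_sets_subset_cells[OF E]] mult_right_mono by fastforce
  qed
  also have "\<dots> \<le> (\<Sum>E\<in>Pow (cells s N). x ^ weight E / x ^ N * \<phi> (sym_diff D E))"
  proof (rule sum_mono2)
    show "QN_sets s N \<subseteq> Pow (cells s N)"
      using QN_sets_subset_cells by blast
  qed (use x nonneg' in auto)
  also have "\<dots> = weighted_conv s N x \<phi> D / x ^ N"
    by (simp add: weighted_conv_def sum_divide_distrib)
  finally show ?thesis .
qed

lemma prod_sym_diff:
  assumes "E \<subseteq> A" and "finite A"
  shows "(\<Prod>u\<in>A. f u (u \<in> sym_diff D E)) = (\<Prod>u\<in>E. f u (u \<notin> D)) * (\<Prod>u\<in>A - E. f u (u \<in> D))"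
proof -
  have "(\<Prod>u\<in>A. f u (u \<in> sym_diff D E)) = (\<Prod>u\<in>A - E. f u (u \<in> sym_diff D E)) * (\<Prod>u\<in>E. f u (u \<in> sym_diff D E))"
    using prod.subset_diff[OF assms] .
  also have "\<dots> = (\<Prod>u\<in>A - E. f u (u \<in> D)) * (\<Prod>u\<in>E. f u (u \<notin> D))"
    by (intro arg_cong2[where f = "(*)"] prod.cong) auto
  finally show ?thesis
    by (simp add: mult.commute)
qed

lemma weighted_conv_prod:
  assumes "D \<subseteq> cells s N"
  shows "weighted_conv s N x (\<lambda>D. \<kappa> * (\<Prod>u\<in>cells s N. f u (u \<in> D))) D
       = \<kappa> * (\<Prod>u\<in>cells s N. f u (u \<in> D) + x ^ snd u * f u (u \<notin> D))"
proof -
  have summand: "x ^ weight E * (\<kappa> * (\<Prod>u\<in>cells s N. f u (u \<in> sym_diff D E)))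
      = \<kappa> * ((\<Prod>u\<in>E. x ^ snd u * f u (u \<notin> D)) * (\<Prod>u\<in>cells s N - E. f u (u \<in> D)))"
    if "E \<subseteq> cells s N" for E
    using finite_subset[OF that]
    by (simp only: prod_sym_diff[OF that finite_cells]) (simp add: power_weight prod.distrib mult_ac)
  have "weighted_conv s N x (\<lambda>D. \<kappa> * (\<Prod>u\<in>cells s N. f u (u \<in> D))) D
      = \<kappa> * (\<Sum>E\<in>Pow (cells s N). (\<Prod>u\<in>E. x ^ snd u * f u (u \<notin> D)) * (\<Prod>u\<in>cells s N - E. f u (u \<in> D)))"
    unfolding weighted_conv_def sum_distrib_left by (rule sum.cong[OF refl]) (use summand in blast)
  also have "\<dots> = \<kappa> * (\<Prod>u\<in>cells s N. x ^ snd u * f u (u \<notin> D) + f u (u \<in> D))"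
    by (simp add: prod_add)
  finally show ?thesis
    by (simp add: add.commute)
qed

text \<open>The factor of a single cell after \<open>k\<close> weighted convolutions: \<open>cell_factor a b k\<close> is the
  \<open>k\<close>-th iterate of \<open>(F, T) \<mapsto> (F + a T, T + a F)\<close> started at \<open>(1, b)\<close>, where \<open>F\<close> and \<open>T\<close>
  are the factors of a cell not in, resp. in, the current set.\<close>

definition cell_factor :: "real \<Rightarrow> real \<Rightarrow> nat \<Rightarrow> bool \<Rightarrow> real" where
  "cell_factor a b k occupied =
     ((1 + a) ^ k * (1 + b) + (if occupied then -1 else 1) * ((1 - a) ^ k * (1 - b))) / 2"

lemma cell_factor_0: "cell_factor a b 0 occupied = (if occupied then b else 1)"
  by (simp add: cell_factor_def)

lemma cell_factor_Suc:
  "cell_factor a b (Suc k) occupied = cell_factor a b k occupied + a * cell_factor a b k (\<not> occupied)"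
  by (simp add: cell_factor_def field_simps)

lemma cell_factor_bounds:
  assumes "0 \<le> a" "a \<le> 1" "0 \<le> b" "b \<le> 1"
  shows "0 \<le> cell_factor a b k occupied \<and> cell_factor a b k occupied \<le> cell_factor a b k False"
proof -
  have "0 \<le> (1 - a) ^ k * (1 - b)"
    using assms by simp
  moreover have "(1 - a) ^ k * (1 - b) \<le> (1 + a) ^ k * (1 + b)"
    using assms by (intro mult_mono power_mono) auto
  ultimately show ?thesis
    by (auto simp: cell_factor_def)
qed

lemma QN_conv_power_indicator_le:
  assumes x: "0 < x" "x \<le> 1" and y: "0 < y" "y \<le> 1" and D: "D \<subseteq> cells s N"
  shows "(QN_conv s N ^^ k) (\<lambda>D. of_bool (D \<in> QN_sets s N)) D
           \<le> (\<Prod>u\<in>cells s N. cell_factor (x ^ snd u) (y ^ snd u) k (u \<in> D)) / (y ^ N * x ^ (k * N))"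
  using D
proof (induction k arbitrary: D)
  case 0
  have "(\<Prod>u\<in>cells s N. cell_factor (x ^ snd u) (y ^ snd u) 0 (u \<in> D)) = y ^ weight D"
    using 0 finite_subset[OF 0]
    by (simp add: cell_factor_0 power_weight prod.If_cases Int_absorb1)
  moreover have "y ^ N \<le> y ^ weight D" if "D \<in> QN_sets s N"
    using that y by (intro power_decreasing) (auto simp: QN_sets_def)
  ultimately show ?case
    using y by auto
next
  case (Suc k)
  let ?F = "\<lambda>k occupied u. cell_factor (x ^ snd u) (y ^ snd u) k occupied"
  let ?B = "\<lambda>D. 1 / (y ^ N * x ^ (k * N)) * (\<Prod>u\<in>cells s N. ?F k (u \<in> D) u)"
  have nonneg: "0 \<le> ?B D'" for D'
    using cell_factor_bounds x y by (intro mult_nonneg_nonneg prod_nonneg) (auto simp: power_le_one)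
  have "(QN_conv s N ^^ Suc k) (\<lambda>D. of_bool (D \<in> QN_sets s N)) D
      = QN_conv s N ((QN_conv s N ^^ k) (\<lambda>D. of_bool (D \<in> QN_sets s N))) D"
    by simp
  also have "\<dots> \<le> QN_conv s N ?B D"
    using Suc by (intro QN_conv_mono) auto
  also have "\<dots> \<le> weighted_conv s N x ?B D / x ^ N"
    using x nonneg Suc.prems by (rule QN_conv_le_weighted_conv)
  also have "weighted_conv s N x ?B D
      = 1 / (y ^ N * x ^ (k * N)) * (\<Prod>u\<in>cells s N. ?F (Suc k) (u \<in> D) u)"
    unfolding cell_factor_Suc by (rule weighted_conv_prod[OF Suc.prems])
  finally show ?case
    using x y by (simp add: field_simps power_add)
qed

section \<open>A second moment lower bound for the number of sets\<close>

text \<open>Under the probability measure giving \<open>D \<subseteq> S\<close> the mass \<open>x ^ weight D / tilted_Z x S\<close>, the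
  cells are independent, and \<open>weight D\<close> has mean \<open>tilted_mean x S\<close> and variance
  \<open>tilted_var x S\<close>.\<close>

definition tilted_Z :: "real \<Rightarrow> (nat \<times> nat) set \<Rightarrow> real" where
  "tilted_Z x S = (\<Prod>u\<in>S. 1 + x ^ snd u)"

definition tilted_mean :: "real \<Rightarrow> (nat \<times> nat) set \<Rightarrow> real" where
  "tilted_mean x S = (\<Sum>u\<in>S. real (snd u) * x ^ snd u / (1 + x ^ snd u))"

definition tilted_var :: "real \<Rightarrow> (nat \<times> nat) set \<Rightarrow> real" where
  "tilted_var x S = (\<Sum>u\<in>S. real (snd u) ^ 2 * x ^ snd u / (1 + x ^ snd u) ^ 2)"

lemma tilted_Z_pos: "0 \<le> x \<Longrightarrow> 0 < tilted_Z x S"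
  by (simp add: tilted_Z_def prod_pos add_pos_nonneg)

lemma sum_Pow_power_weight:
  assumes "finite S"
  shows "(\<Sum>D\<in>Pow S. x ^ weight D) = tilted_Z x S"
proof -
  have "(\<Sum>D\<in>Pow S. x ^ weight D) = (\<Sum>D\<in>Pow S. (\<Prod>u\<in>D. x ^ snd u) * (\<Prod>u\<in>S - D. 1))"
    by (intro sum.cong refl) (simp add: power_weight rev_finite_subset[OF assms])
  also have "\<dots> = tilted_Z x S"
    using prod_add[OF assms, of "\<lambda>u. x ^ snd u" "\<lambda>_. 1"] by (simp add: tilted_Z_def add.commute)
  finally show ?thesis .
qed

lemma sum_Pow_insert:
  assumes "finite A" and "a \<notin> A"
  shows "(\<Sum>D\<in>Pow (insert a A). f D) = (\<Sum>D\<in>Pow A. f D) + (\<Sum>D\<in>Pow A. f (insert a D))"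
proof -
  have "inj_on (insert a) (Pow A)"
    using assms(2) by (intro inj_onI) (auto simp: insert_ident)
  moreover have "Pow A \<inter> insert a ` Pow A = {}"
    using assms(2) by auto
  ultimately show ?thesis
    using assms(1) by (simp add: Pow_insert sum.union_disjoint sum.reindex)
qed

lemma sum_Pow_power_weight_sq:
  assumes "finite S" and "0 < x"
  shows "(\<Sum>D\<in>Pow S. x ^ weight D * (real (weight D) - c) ^ 2)
           = tilted_Z x S * (tilted_var x S + (tilted_mean x S - c) ^ 2)"
  using assms(1)
proof (induction S arbitrary: c rule: finite_induct)
  case empty
  show ?case
    by (simp add: tilted_Z_def tilted_var_def tilted_mean_def weight_def)
next
  case (insert a A)
  define l where "l = snd a"
  define p where "p = 1 + x ^ l"
  have "0 < x ^ l"
    using assms(2) by simp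
  then have "p \<noteq> 0"
    unfolding p_def by linarith
  have weight: "weight (insert a D) = l + weight D" if "D \<in> Pow A" for D
  proof -
    have "finite D" and "a \<notin> D"
      using insert.hyps that by (auto intro: finite_subset)
    then show ?thesis
      by (simp add: l_def weight_insert)
  qed
  have "(\<Sum>D\<in>Pow (insert a A). x ^ weight D * (real (weight D) - c) ^ 2)
      = (\<Sum>D\<in>Pow A. x ^ weight D * (real (weight D) - c) ^ 2)
        + (p - 1) * (\<Sum>D\<in>Pow A. x ^ weight D * (real (weight D) - (c - l)) ^ 2)"
    by (simp add: sum_Pow_insert[OF insert.hyps] weight power_add p_def sum_distrib_left algebra_simps)
  also have "\<dots> = tilted_Z x A * (tilted_var x A + (tilted_mean x A - c) ^ 2)
        + (p - 1) * (tilted_Z x A * (tilted_var x A + ((tilted_mean x A - c) + l) ^ 2))"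
    by (simp only: insert.IH) (simp add: algebra_simps)
  also have "\<dots> = tilted_Z x A * p * ((tilted_var x A + l ^ 2 * (p - 1) / p ^ 2)
      + ((tilted_mean x A - c) + l * (p - 1) / p) ^ 2)"
    using \<open>p \<noteq> 0\<close> by (simp add: field_simps power2_eq_square)
  also have "\<dots> = tilted_Z x (insert a A) * (tilted_var x (insert a A) + (tilted_mean x (insert a A) - c) ^ 2)"
    using insert.hyps
    by (simp add: tilted_Z_def tilted_var_def tilted_mean_def l_def p_def algebra_simps)
  finally show ?case .
qed

lemma tilted_chebyshev:
  assumes S: "finite S" and x: "0 < x" and M: "0 < M"
  shows "(\<Sum>D | D \<subseteq> S \<and> M / 2 \<le> \<bar>real (weight D) - tilted_mean x S\<bar>. x ^ weight D)
           \<le> tilted_Z x S * tilted_var x S / (M / 2) ^ 2"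
proof -
  define F where "F = {D. D \<subseteq> S \<and> M / 2 \<le> \<bar>real (weight D) - tilted_mean x S\<bar>}"
  have "(\<Sum>D\<in>F. x ^ weight D)
      \<le> (\<Sum>D\<in>F. x ^ weight D * (real (weight D) - tilted_mean x S) ^ 2 / (M / 2) ^ 2)"
  proof (rule sum_mono)
    fix D assume "D \<in> F"
    then have "(M / 2) ^ 2 \<le> (real (weight D) - tilted_mean x S) ^ 2"
      using M by (auto simp: F_def abs_le_square_iff[symmetric])
    then show "x ^ weight D \<le> x ^ weight D * (real (weight D) - tilted_mean x S) ^ 2 / (M / 2) ^ 2"
      using x M by (simp add: field_simps)
  qed
  also have "\<dots> \<le> (\<Sum>D\<in>Pow S. x ^ weight D * (real (weight D) - tilted_mean x S) ^ 2 / (M / 2) ^ 2)"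
    using S x by (intro sum_mono2) (auto simp: F_def)
  also have "\<dots> = tilted_Z x S * tilted_var x S / (M / 2) ^ 2"
    using S x by (simp add: sum_divide_distrib[symmetric] sum_Pow_power_weight_sq)
  finally show ?thesis
    by (simp add: F_def)
qed

text \<open>At least half of the tilted mass sits on sets whose weight lies in \<open>(N - M, N)\<close>.\<close>

lemma tilted_Z_le_card_weight_le:
  assumes S: "finite S" and x: "0 < x" "x < 1" and M: "0 < M"
    and mean: "tilted_mean x S = real N - M / 2" and var: "tilted_var x S \<le> M ^ 2 / 8"
  shows "tilted_Z x S \<le> 2 * real (card {D. D \<subseteq> S \<and> weight D \<le> N}) * x powr (real N - M)"
proof -
  define G where "G = {D \<in> Pow S. \<bar>real (weight D) - tilted_mean x S\<bar> < M / 2}"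
  have "Pow S - G = {D. D \<subseteq> S \<and> M / 2 \<le> \<bar>real (weight D) - tilted_mean x S\<bar>}"
    by (auto simp: G_def)
  then have "(\<Sum>D\<in>Pow S - G. x ^ weight D) \<le> tilted_Z x S * tilted_var x S / (M / 2) ^ 2"
    using tilted_chebyshev[OF S x(1) M] by simp
  also have "\<dots> \<le> tilted_Z x S / 2"
    using var M tilted_Z_pos[of x S] x by (simp add: field_simps power2_eq_square)
  finally have outside: "(\<Sum>D\<in>Pow S - G. x ^ weight D) \<le> tilted_Z x S / 2" .
  have in_G: "D \<subseteq> S \<and> real N - M < real (weight D) \<and> real (weight D) < real N" if "D \<in> G" for D
  proof -
    have "\<bar>real (weight D) - tilted_mean x S\<bar> < M / 2" and "D \<subseteq> S"
      using that by (simp_all add: G_def)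
    then show ?thesis
      unfolding abs_less_iff mean by auto
  qed
  then have "G \<subseteq> Pow S"
    by blast
  then have "tilted_Z x S / 2 \<le> (\<Sum>D\<in>G. x ^ weight D)"
    using sum.subset_diff[of G "Pow S" "\<lambda>D. x ^ weight D"] S sum_Pow_power_weight[OF S, of x] outside
    by simp
  also have "\<dots> \<le> (\<Sum>D\<in>G. x powr (real N - M))"
  proof (rule sum_mono)
    fix D assume "D \<in> G"
    then have "real N - M \<le> real (weight D)"
      using in_G by force
    then show "x ^ weight D \<le> x powr (real N - M)"
      using x by (simp add: powr_realpow[symmetric] powr_mono')
  qed
  also have "\<dots> \<le> real (card {D. D \<subseteq> S \<and> weight D \<le> N}) * x powr (real N - M)"
  proof -
    have "G \<subseteq> {D. D \<subseteq> S \<and> weight D \<le> N}"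
      using in_G by force
    then have "card G \<le> card {D. D \<subseteq> S \<and> weight D \<le> N}"
      using S by (intro card_mono) (auto intro: finite_subset[of _ "Pow S"])
    then show ?thesis
      by (simp add: mult_right_mono)
  qed
  finally show ?thesis
    by simp
qed

lemma card_weight_le_cells:
  assumes "1 \<le> s" "1 \<le> N"
  shows "real (card {D. D \<subseteq> cells s N \<and> weight D \<le> N}) \<le> 2 * real (card (QN_sets s N))"
proof -
  have "{(0, 1)} \<in> QN_sets s N"
    using assms by (simp add: QN_sets_def cells_def weight_def)
  then have "1 \<le> card (QN_sets s N)"
    using finite_QN_sets card_0_eq[of "QN_sets s N"] by fastforce
  moreover have "{D. D \<subseteq> cells s N \<and> weight D \<le> N} = insert {} (QN_sets s N)"
    by (auto simp: QN_sets_def weight_def)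
  moreover have "{} \<notin> QN_sets s N"
    by (simp add: QN_sets_def)
  ultimately show ?thesis
    by simp
qed

lemma tilted_Z_le_card_QN_sets:
  assumes "1 \<le> s" "1 \<le> N" and x: "0 < x" "x < 1" and M: "0 < M"
    and mean: "tilted_mean x (cells s N) = real N - M / 2"
    and var: "tilted_var x (cells s N) \<le> M ^ 2 / 8"
  shows "tilted_Z x (cells s N) \<le> 4 * real (card (QN_sets s N)) * x powr (real N - M)"
  using tilted_Z_le_card_weight_le[OF finite_cells x M mean var] card_weight_le_cells[OF assms(1,2)]
    mult_right_mono[of _ _ "x powr (real N - M)"] by fastforce

section \<open>The master bound\<close>

lemma prod_cells: "(\<Prod>u\<in>cells s N. f (snd u)) = (\<Prod>l\<in>{1..N}. f l) ^ s"
  by (simp add: cells_def prod.cartesian_product')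

lemma sum_cells: "(\<Sum>u\<in>cells s N. f (snd u)) = real s * (\<Sum>l\<in>{1..N}. f l)"
  by (simp add: cells_def sum.cartesian_product')

lemma xor_prob_le_QN_conv_bound:
  assumes "m \<le> r" and "1 \<le> card (QN_sets s N)"
    and bound: "\<And>D. D \<subseteq> cells s N \<Longrightarrow> (QN_conv s N ^^ m) (\<lambda>D. of_bool (D \<in> QN_sets s N)) D \<le> B"
  shows "xor_prob s N r \<le> B / real (card (QN_sets s N)) ^ m"
proof -
  define c where "c = real (card (QN_sets s N))"
  define \<phi> where "\<phi> = (QN_conv s N ^^ m) (\<lambda>D. of_bool (D \<in> QN_sets s N))"
  have c: "0 < c"
    using assms(2) by (simp add: c_def)
  have "0 \<le> \<phi> D \<and> \<phi> D \<le> B" if "D \<subseteq> cells s N" for D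
  proof -
    have "0 \<le> \<phi> D"
      unfolding \<phi>_def by (rule QN_conv_power_bounds[where c = 1, THEN conjunct1, OF _ that]) simp
    then show ?thesis
      using bound that by (simp add: \<phi>_def)
  qed
  then have steps: "(QN_conv s N ^^ (r - m)) \<phi> {} \<le> c ^ (r - m) * B"
    unfolding c_def by (rule QN_conv_power_bounds[THEN conjunct2]) simp_all
  have "xor_prob s N r = (QN_conv s N ^^ (r - m)) \<phi> {} / c ^ r"
    using funpow_add[of "r - m" m "QN_conv s N"] assms(1)
    by (simp add: xor_prob_eq_QN_conv_power \<phi>_def c_def)
  also have "\<dots> \<le> c ^ (r - m) * B / c ^ r"
    using steps c by (simp add: divide_right_mono)
  also have "\<dots> = B / c ^ m"
    using c assms(1) by (simp add: power_diff)
  finally show ?thesis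
    by (simp add: c_def)
qed

definition gain :: "real \<Rightarrow> real \<Rightarrow> nat \<Rightarrow> nat \<Rightarrow> real" where
  "gain x y m l = (1 - y ^ l) * (1 - ((1 - x ^ l) / (1 + x ^ l)) ^ m) / 2"

lemma one_minus_div_one_plus_bounds:
  fixes a :: real
  assumes "0 \<le> a" "a \<le> 1"
  shows "0 \<le> (1 - a) / (1 + a)" "(1 - a) / (1 + a) \<le> 1 - a"
proof -
  have "0 \<le> (1 - a) * a"
    using assms by simp
  then have "1 - a \<le> (1 - a) * (1 + a)"
    by (simp add: algebra_simps)
  then show "(1 - a) / (1 + a) \<le> 1 - a"
    using assms by (simp add: pos_divide_le_eq)
  show "0 \<le> (1 - a) / (1 + a)"
    using assms by simp
qed

lemma gain_bounds:
  assumes "0 \<le> x" "x \<le> 1" "0 \<le> y" "y \<le> 1"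
  shows "0 \<le> gain x y m l \<and> gain x y m l \<le> 1"
proof -
  define \<rho> where "\<rho> = (1 - x ^ l) / (1 + x ^ l)"
  have "0 \<le> x ^ l" "x ^ l \<le> 1" "0 \<le> y ^ l" "y ^ l \<le> 1"
    using assms by (auto simp: power_le_one)
  then have "0 \<le> \<rho> ^ m" "\<rho> ^ m \<le> 1"
    using one_minus_div_one_plus_bounds[of "x ^ l"] by (auto simp: \<rho>_def power_le_one)
  then have "0 \<le> (1 - y ^ l) * (1 - \<rho> ^ m)" "(1 - y ^ l) * (1 - \<rho> ^ m) \<le> 1"
    using \<open>0 \<le> y ^ l\<close> \<open>y ^ l \<le> 1\<close> mult_le_one[of "1 - y ^ l" "1 - \<rho> ^ m"] by simp_all
  then show ?thesis
    by (simp add: gain_def \<rho>_def)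
qed

lemma cell_factor_div_power:
  assumes "0 \<le> a"
  shows "cell_factor a b m False / (1 + a) ^ m = 1 - (1 - b) * (1 - ((1 - a) / (1 + a)) ^ m) / 2"
proof -
  have "(A * (1 + b) + C * (1 - b)) / 2 / A = 1 - (1 - b) * (1 - C / A) / 2" if "A \<noteq> 0" for A C :: real
    using that by (simp add: field_simps)
  moreover have "(1 + a) ^ m \<noteq> 0"
    using assms by simp
  ultimately show ?thesis
    by (simp add: cell_factor_def power_divide)
qed

lemma xor_prob_le_cell_factor_prod:
  assumes x: "0 < x" "x \<le> 1" and y: "0 < y" "y \<le> 1" and m: "m \<le> r"
    and card: "1 \<le> card (QN_sets s N)"
  shows "xor_prob s N r \<le> (\<Prod>u\<in>cells s N. cell_factor (x ^ snd u) (y ^ snd u) m False)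
           / (y ^ N * x ^ (m * N)) / real (card (QN_sets s N)) ^ m"
proof (rule xor_prob_le_QN_conv_bound[OF m card])
  fix D assume "D \<subseteq> cells s N"
  then have "(\<Prod>u\<in>cells s N. cell_factor (x ^ snd u) (y ^ snd u) m (u \<in> D))
      \<le> (\<Prod>u\<in>cells s N. cell_factor (x ^ snd u) (y ^ snd u) m False)"
    using x y cell_factor_bounds by (intro prod_mono) (auto simp: power_le_one)
  then show "(QN_conv s N ^^ m) (\<lambda>D. of_bool (D \<in> QN_sets s N)) D
      \<le> (\<Prod>u\<in>cells s N. cell_factor (x ^ snd u) (y ^ snd u) m False) / (y ^ N * x ^ (m * N))"
    using QN_conv_power_indicator_le[of x y D s N m] \<open>D \<subseteq> cells s N\<close> x y
    by (smt (verit) divide_right_mono zero_le_mult_iff zero_less_power)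
qed

lemma prod_cell_factor_div_tilted_Z:
  assumes "0 \<le> x"
  shows "(\<Prod>u\<in>cells s N. cell_factor (x ^ snd u) (y ^ snd u) m False) / tilted_Z x (cells s N) ^ m
           = (\<Prod>l\<in>{1..N}. 1 - gain x y m l) ^ s"
proof -
  have "(\<Prod>u\<in>cells s N. cell_factor (x ^ snd u) (y ^ snd u) m False) / tilted_Z x (cells s N) ^ m
      = (\<Prod>u\<in>cells s N. cell_factor (x ^ snd u) (y ^ snd u) m False / (1 + x ^ snd u) ^ m)"
    by (simp add: tilted_Z_def prod_power_distrib prod_dividef)
  also have "\<dots> = (\<Prod>u\<in>cells s N. 1 - gain x y m (snd u))"
    using assms by (simp add: cell_factor_div_power gain_def)
  also have "\<dots> = (\<Prod>l\<in>{1..N}. 1 - gain x y m l) ^ s"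
    by (rule prod_cells)
  finally show ?thesis .
qed

lemma powr_power_div_power:
  fixes x :: real
  assumes "0 < x"
  shows "(x powr (real N - M)) ^ m / x ^ (m * N) = 1 / x powr (real m * M)"
proof -
  have "(x powr (real N - M)) ^ m = x powr (real m * (real N - M))"
    using assms by (simp add: powr_power)
  moreover have "x ^ (m * N) = x powr (real m * real N)"
    using assms by (simp add: powr_realpow[symmetric])
  ultimately have "(x powr (real N - M)) ^ m / x ^ (m * N) = x powr (real m * (real N - M)) / x powr (real m * real N)"
    by simp
  also have "\<dots> = x powr (- (real m * M))"
    by (simp add: powr_diff[symmetric] algebra_simps)
  finally show ?thesis
    by (simp add: powr_minus_divide)
qed

text \<open>Rankin's bound on the numerator is combined with the second moment bound on the
  denominator \<open>card (QN_sets s N) ^ m\<close>.\<close>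

lemma xor_prob_le_gain_product:
  assumes "1 \<le> s" "1 \<le> N" and x: "0 < x" "x < 1" and y: "0 < y" "y \<le> 1" and M: "0 < M"
    and mean: "tilted_mean x (cells s N) = real N - M / 2"
    and var: "tilted_var x (cells s N) \<le> M ^ 2 / 8"
    and m: "m \<le> r"
  shows "xor_prob s N r
           \<le> 4 ^ m / (y ^ N * x powr (real m * M)) * (\<Prod>l\<in>{1..N}. 1 - gain x y m l) ^ s"
proof -
  define c where "c = real (card (QN_sets s N))"
  define P where "P = (\<Prod>u\<in>cells s N. cell_factor (x ^ snd u) (y ^ snd u) m False)"
  define Z where "Z = tilted_Z x (cells s N)"
  define X where "X = x powr (real N - M)"
  have Z: "0 < Z" and X: "0 < X" and P: "0 \<le> P"
    using x y cell_factor_bounds by (auto simp: Z_def X_def P_def tilted_Z_pos power_le_one intro: prod_nonneg)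
  have Zc: "Z / (4 * X) \<le> c"
    using tilted_Z_le_card_QN_sets[OF assms(1,2) x M mean var] X
    by (simp add: Z_def c_def X_def pos_divide_le_eq ac_simps)
  then have c: "0 < c"
    using Z X by (smt (verit) divide_pos_pos)
  then have "xor_prob s N r \<le> P / (y ^ N * x ^ (m * N)) / c ^ m"
    using xor_prob_le_cell_factor_prod[OF x(1) _ y m] x by (simp add: P_def c_def)
  also have "\<dots> \<le> P / (y ^ N * x ^ (m * N)) / (Z / (4 * X)) ^ m"
    using Zc Z X P c x y by (intro divide_left_mono power_mono) auto
  also have "\<dots> = 4 ^ m * (P / Z ^ m) * (X ^ m / x ^ (m * N)) / y ^ N"
  proof -
    have "P / (a * b) / (z / (4 ^ m * w)) = 4 ^ m * (P / z) * (w / b) / a"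
      if "a \<noteq> 0" "b \<noteq> 0" "z \<noteq> 0" "w \<noteq> 0" for a b z w :: real
      using that by (simp add: field_simps)
    then show ?thesis
      using Z X x y by (simp add: power_divide power_mult_distrib)
  qed
  also have "X ^ m / x ^ (m * N) = 1 / x powr (real m * M)"
    unfolding X_def using x(1) by (rule powr_power_div_power)
  also have "P / Z ^ m = (\<Prod>l\<in>{1..N}. 1 - gain x y m l) ^ s"
    unfolding P_def Z_def using x by (simp add: prod_cell_factor_div_tilted_Z)
  finally show ?thesis
    by (simp add: ac_simps)
qed

lemma minus_two_mult_one_minus_le_ln:
  fixes x :: real
  assumes "1 / 2 \<le> x" "x \<le> 1"
  shows "- 2 * (1 - x) \<le> ln x"
proof -
  have "ln (1 / x) \<le> 1 / x - 1"
    using assms by (intro ln_le_minus_one) simp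
  also have "\<dots> \<le> 2 * (1 - x)"
    using assms mult_left_mono[of 1 "2 * x" "1 - x"] by (auto simp: field_simps)
  finally show ?thesis
    using assms by (simp add: ln_div)
qed

lemma prod_one_minus_le_exp:
  fixes t :: "nat \<Rightarrow> real"
  assumes "finite A" and "\<And>l. l \<in> A \<Longrightarrow> 0 \<le> t l \<and> t l \<le> 1"
  shows "(\<Prod>l\<in>A. 1 - t l) \<le> exp (- (\<Sum>l\<in>A. t l))"
proof -
  have "(\<Prod>l\<in>A. 1 - t l) \<le> (\<Prod>l\<in>A. exp (- t l))"
  proof (rule prod_mono)
    fix l assume "l \<in> A"
    then show "0 \<le> 1 - t l \<and> 1 - t l \<le> exp (- t l)"
      using assms(2) exp_ge_add_one_self[of "- t l"] by auto
  qed
  also have "\<dots> = exp (- (\<Sum>l\<in>A. t l))"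
    using assms(1) by (simp add: exp_sum[symmetric] sum_negf)
  finally show ?thesis .
qed

lemma xor_prob_le_exp_gain:
  assumes "1 \<le> s" "1 \<le> N" and x: "1 / 2 \<le> x" "x < 1" and b: "0 \<le> b" and M: "0 < M"
    and mean: "tilted_mean x (cells s N) = real N - M / 2"
    and var: "tilted_var x (cells s N) \<le> M ^ 2 / 8"
    and m: "m \<le> r"
  shows "xor_prob s N r \<le> exp (real m * ln 4 + 2 * real m * M * (1 - x) + b * sqrt (real N)
           - real s * (\<Sum>l\<in>{1..N}. gain x (exp (- b / sqrt (real N))) m l))"
proof -
  define y where "y = exp (- b / sqrt (real N))"
  define G where "G = (\<Sum>l\<in>{1..N}. gain x y m l)"
  have y: "0 < y" "y \<le> 1"
    using b by (auto simp: y_def)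
  have "real N * (- b / sqrt (real N)) = - b * sqrt (real N)"
    using assms(2) by (simp add: field_simps)
  then have yN: "y ^ N = exp (- b * sqrt (real N))"
    by (simp add: y_def exp_of_nat_mult[symmetric])
  have "- (real m * M * ln x) \<le> 2 * real m * M * (1 - x)"
    using mult_left_mono[OF minus_two_mult_one_minus_le_ln[of x], of "real m * M"] x M
    by (auto simp: algebra_simps)
  then have E1: "1 / x powr (real m * M) \<le> exp (2 * real m * M * (1 - x))"
    using x by (simp add: powr_def exp_minus'[symmetric])
  have E2: "(\<Prod>l\<in>{1..N}. 1 - gain x y m l) ^ s \<le> exp (- G) ^ s"
    using gain_bounds[of x y m] x y unfolding G_def
    by (intro power_mono prod_one_minus_le_exp prod_nonneg) auto
  have "0 \<le> (\<Prod>l\<in>{1..N}. 1 - gain x y m l) ^ s"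
    using gain_bounds[of x y m] x y by (intro zero_le_power prod_nonneg) auto
  then have factors: "1 / x powr (real m * M) * (\<Prod>l\<in>{1..N}. 1 - gain x y m l) ^ s
      \<le> exp (2 * real m * M * (1 - x)) * exp (- G) ^ s"
    using mult_mono[OF E1 E2] by simp
  have "4 ^ m / y ^ N * (1 / x powr (real m * M)) * (\<Prod>l\<in>{1..N}. 1 - gain x y m l) ^ s
      \<le> 4 ^ m / y ^ N * exp (2 * real m * M * (1 - x)) * exp (- G) ^ s"
    using mult_left_mono[OF factors, of "4 ^ m / y ^ N"] y by (simp only: mult.assoc) simp
  also have "\<dots> = exp (real m * ln 4) * exp (2 * real m * M * (1 - x)) * exp (b * sqrt (real N))
      * exp (- (real s * G))"
  proof -
    have "4 ^ m / y ^ N = exp (real m * ln 4) * exp (b * sqrt (real N))"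
      by (simp add: yN exp_minus' exp_of_nat_mult)
    moreover have "exp (- G) ^ s = exp (- (real s * G))"
      by (simp add: exp_of_nat_mult[symmetric])
    ultimately show ?thesis
      by (simp only: ac_simps)
  qed
  also have "\<dots> = exp (real m * ln 4 + 2 * real m * M * (1 - x) + b * sqrt (real N) - real s * G)"
    by (simp only: exp_add[symmetric] diff_conv_add_uminus)
  finally show ?thesis
    using xor_prob_le_gain_product[OF assms(1,2) _ x(2) y M mean var m] x
    by (simp add: G_def y_def mult.commute)
qed

section \<open>Choice of the tilting parameter\<close>

lemma mult_power_le:
  fixes z :: real
  assumes "0 \<le> z" "z < 1"
  shows "real l * z ^ l \<le> 1 / (1 - z)"
proof -
  have "real l * z ^ l = (\<Sum>k<l. z ^ l)"
    by simp
  also have "\<dots> \<le> (\<Sum>k<l. z ^ k)"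
    using assms by (intro sum_mono power_decreasing) auto
  also have "\<dots> = (1 - z ^ l) / (1 - z)"
    using assms by (simp only: sum_gp_strict) simp
  also have "\<dots> \<le> 1 / (1 - z)"
    using assms by (intro divide_right_mono) auto
  finally show ?thesis .
qed

lemma sum_power_le:
  fixes z :: real
  assumes "0 \<le> z" "z < 1"
  shows "(\<Sum>l\<in>{1..N}. z ^ l) \<le> 1 / (1 - z)"
proof -
  have "(\<Sum>l\<in>{1..N}. z ^ l) \<le> (\<Sum>l<Suc N. z ^ l)"
    using assms by (intro sum_mono2) auto
  also have "\<dots> = (1 - z ^ Suc N) / (1 - z)"
    using assms by (simp only: sum_gp_strict) simp
  also have "\<dots> \<le> 1 / (1 - z)"
    using assms by (intro divide_right_mono) auto
  finally show ?thesis .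
qed

text \<open>Both sums are estimated through \<open>z = sqrt x\<close>: a factor \<open>z ^ l\<close> absorbs the polynomial
  weight, and \<open>1 - x \<le> 2 * (1 - z)\<close>.\<close>

lemma inverse_one_minus_sqrt_le:
  fixes x :: real
  assumes "0 \<le> x" "x < 1"
  shows "1 / (1 - sqrt x) \<le> 2 / (1 - x)"
proof -
  have "1 - x = (1 - sqrt x) * (1 + sqrt x)"
    using assms by (simp add: algebra_simps)
  also have "\<dots> \<le> (1 - sqrt x) * 2"
    using assms by (intro mult_left_mono) auto
  finally show ?thesis
    using assms by (simp add: field_simps)
qed

lemma sum_mult_power_le:
  fixes x :: real
  assumes "0 \<le> x" "x < 1"
  shows "(\<Sum>l\<in>{1..N}. real l * x ^ l) \<le> 4 / (1 - x) ^ 2"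
proof -
  define z where "z = sqrt x"
  have z: "0 \<le> z" "z < 1" "1 / (1 - z) \<le> 2 / (1 - x)"
    using assms inverse_one_minus_sqrt_le by (auto simp: z_def)
  have "(\<Sum>l\<in>{1..N}. real l * x ^ l) = (\<Sum>l\<in>{1..N}. (real l * z ^ l) * z ^ l)"
    using assms by (simp add: z_def mult.assoc power_mult_distrib[symmetric])
  also have "\<dots> \<le> (\<Sum>l\<in>{1..N}. 1 / (1 - z) * z ^ l)"
    using mult_power_le[OF z(1,2)] z by (intro sum_mono mult_right_mono) auto
  also have "\<dots> = 1 / (1 - z) * (\<Sum>l\<in>{1..N}. z ^ l)"
    by (simp add: sum_distrib_left)
  also have "\<dots> \<le> 1 / (1 - z) * (1 / (1 - z))"
    using sum_power_le[OF z(1,2)] z by (intro mult_left_mono) auto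
  also have "\<dots> \<le> 2 / (1 - x) * (2 / (1 - x))"
    using z assms by (intro mult_mono) auto
  finally show ?thesis
    by (simp add: power2_eq_square)
qed

lemma sum_sq_mult_power_le:
  fixes x :: real
  assumes "0 \<le> x" "x < 1"
  shows "(\<Sum>l\<in>{1..N}. real l ^ 2 * x ^ l) \<le> 32 / (1 - x) ^ 3"
proof -
  define z where "z = sqrt x"
  have z: "0 \<le> z" "z < 1" "1 / (1 - z) \<le> 2 / (1 - x)"
    using assms inverse_one_minus_sqrt_le by (auto simp: z_def)
  have "(\<Sum>l\<in>{1..N}. real l ^ 2 * x ^ l) = (\<Sum>l\<in>{1..N}. (real l * z ^ l) * (real l * z ^ l))"
    using assms by (simp add: z_def power2_eq_square mult_ac power_mult_distrib[symmetric])
  also have "\<dots> \<le> (\<Sum>l\<in>{1..N}. 1 / (1 - z) * (real l * z ^ l))"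
    using mult_power_le[OF z(1,2)] z by (intro sum_mono mult_right_mono) auto
  also have "\<dots> = 1 / (1 - z) * (\<Sum>l\<in>{1..N}. real l * z ^ l)"
    by (simp add: sum_distrib_left)
  also have "\<dots> \<le> 1 / (1 - z) * (4 * (1 / (1 - z)) ^ 2)"
    using sum_mult_power_le[OF z(1,2)] z by (intro mult_left_mono) (auto simp: power_divide)
  also have "\<dots> = 4 * (1 / (1 - z)) ^ 3"
    by (simp add: power3_eq_cube power2_eq_square)
  also have "\<dots> \<le> 4 * (2 / (1 - x)) ^ 3"
    using z by (intro mult_left_mono power_mono) auto
  finally show ?thesis
    by (simp add: power_divide)
qed

lemma divide_le_self: "0 \<le> a \<Longrightarrow> 1 \<le> d \<Longrightarrow> a / d \<le> (a::real)"
  using divide_left_mono[of 1 d a] by simp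

lemma tilted_mean_cells:
  "tilted_mean x (cells s N) = real s * (\<Sum>l\<in>{1..N}. real l * x ^ l / (1 + x ^ l))"
  unfolding tilted_mean_def by (rule sum_cells)

lemma tilted_var_cells:
  "tilted_var x (cells s N) = real s * (\<Sum>l\<in>{1..N}. real l ^ 2 * x ^ l / (1 + x ^ l) ^ 2)"
  unfolding tilted_var_def by (rule sum_cells)

definition occupancy :: "real \<Rightarrow> nat \<Rightarrow> real" where
  "occupancy x l = x ^ l / (1 + x ^ l)"

lemma occupancy_bounds:
  assumes "0 \<le> x" "x \<le> 1"
  shows "0 \<le> occupancy x l" "occupancy x l \<le> x ^ l" "occupancy x l \<le> 1 / 2"
proof -
  have "0 \<le> x ^ l" "x ^ l \<le> 1"
    using assms by (auto simp: power_le_one)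
  then show "0 \<le> occupancy x l" "occupancy x l \<le> x ^ l" "occupancy x l \<le> 1 / 2"
    by (simp_all add: occupancy_def divide_le_self field_simps)
qed

lemma ratio_eq_one_minus_occupancy: "0 \<le> x \<Longrightarrow> (1 - x ^ l) / (1 + x ^ l) = 1 - 2 * occupancy x l"
  by (simp add: occupancy_def field_simps add_nonneg_eq_0_iff)

lemma tilted_mean_cells_occupancy:
  "tilted_mean x (cells s N) = real s * (\<Sum>l\<in>{1..N}. real l * occupancy x l)"
  by (simp add: tilted_mean_cells occupancy_def)

lemma quarter_le_occupancy:
  assumes "0 \<le> x" "x \<le> 1" "real l * (1 - x) \<le> 1 / 2"
  shows "1 / 4 \<le> occupancy x l"
proof -
  have "1 - real l * (1 - x) \<le> x ^ l"
    using Bernoulli_inequality[of "x - 1" l] assms(1) by (simp add: algebra_simps)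
  then have "1 / 2 \<le> x ^ l"
    using assms(3) by simp
  moreover have "x ^ l \<le> 1"
    using assms by (simp add: power_le_one)
  ultimately show ?thesis
    by (simp add: occupancy_def field_simps)
qed

lemma tilted_mean_cells_le:
  assumes "0 \<le> x" "x < 1"
  shows "tilted_mean x (cells s N) \<le> real s * (4 / (1 - x) ^ 2)"
proof -
  have "(\<Sum>l\<in>{1..N}. real l * x ^ l / (1 + x ^ l)) \<le> (\<Sum>l\<in>{1..N}. real l * x ^ l)"
    using assms by (intro sum_mono divide_le_self) auto
  also have "\<dots> \<le> 4 / (1 - x) ^ 2"
    using assms by (rule sum_mult_power_le)
  finally show ?thesis
    unfolding tilted_mean_cells by (rule mult_left_mono) simp
qed

lemma tilted_var_cells_le:
  assumes "0 \<le> x" "x < 1"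
  shows "tilted_var x (cells s N) \<le> real s * (32 / (1 - x) ^ 3)"
proof -
  have "(\<Sum>l\<in>{1..N}. real l ^ 2 * x ^ l / (1 + x ^ l) ^ 2) \<le> (\<Sum>l\<in>{1..N}. real l ^ 2 * x ^ l)"
    using assms by (intro sum_mono divide_le_self) auto
  also have "\<dots> \<le> 32 / (1 - x) ^ 3"
    using assms by (rule sum_sq_mult_power_le)
  finally show ?thesis
    unfolding tilted_var_cells by (rule mult_left_mono) simp
qed

text \<open>For \<open>x\<close> close to \<open>1\<close>, the levels \<open>l \<le> 5 * sqrt N\<close> alone make the mean large.\<close>

lemma tilted_mean_cells_near_one:
  assumes "1 \<le> s" and "25 \<le> N" and x: "1 - 1 / (10 * sqrt (real N)) \<le> x" "x \<le> 1"
  shows "2 * real N \<le> tilted_mean x (cells s N)"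
proof -
  define q where "q = sqrt (real N)"
  have q: "5 \<le> q" "q * q = real N"
    using assms(2) real_sqrt_le_mono[of 25 "real N"] by (simp_all add: q_def)
  define L where "L = nat \<lfloor>5 * q\<rfloor>"
  have L: "real L \<le> 5 * q" "4 * q \<le> real L"
    using q by (simp_all add: L_def) linarith
  have "1 / (10 * q) \<le> 1"
    using q by simp
  then have x0: "0 \<le> x"
    using x by (simp add: q_def)
  have "(4 * q) * (4 * q) \<le> real L * real L"
    using L q by (intro mult_mono) auto
  then have "16 * real N \<le> real L * (real L + 1)"
    using q by (simp add: algebra_simps)
  then have "2 * real N \<le> (\<Sum>l\<in>{1..L}. real l) / 4"
    using double_gauss_sum_from_Suc_0[of L, where 'a = real] by simp
  also have "\<dots> \<le> (\<Sum>l\<in>{1..L}. real l * occupancy x l)"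
    unfolding sum_divide_distrib
  proof (rule sum_mono)
    fix l assume "l \<in> {1..L}"
    then have "real l * (1 - x) \<le> 5 * q * (1 / (10 * q))"
      using L x q by (intro mult_mono) (auto simp: q_def)
    then have "1 / 4 \<le> occupancy x l"
      using q x0 x by (intro quarter_le_occupancy) auto
    then show "real l / 4 \<le> real l * occupancy x l"
      using mult_left_mono[of "1 / 4" "occupancy x l" "real l"] by simp
  qed
  also have "\<dots> \<le> (\<Sum>l\<in>{1..N}. real l * occupancy x l)"
  proof (rule sum_mono2)
    have "5 * q \<le> q * q"
      using q by (intro mult_right_mono) auto
    then show "{1..L} \<subseteq> {1..N}"
      using L q by auto
  qed (use x0 x occupancy_bounds in auto)
  also have "\<dots> \<le> tilted_mean x (cells s N)"
    unfolding tilted_mean_cells_occupancy using assms(1) x0 x occupancy_bounds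
    by (intro mult_right_mono[of 1 "real s", simplified] sum_nonneg) auto
  finally show ?thesis .
qed

lemma tilted_mean_one_ge:
  assumes "1 \<le> s" "4 \<le> N"
  shows "real N \<le> tilted_mean 1 (cells s N)"
proof -
  have "tilted_mean 1 (cells s N) = real s * (\<Sum>l\<in>{1..N}. real l) / 2"
    by (simp add: tilted_mean_cells sum_divide_distrib[symmetric])
  also have "\<dots> = real s * (real N * (real N + 1)) / 4"
    using double_gauss_sum_from_Suc_0[of N, where 'a = real] by simp
  moreover have "real N * 4 \<le> real N * (real N + 1)"
    using assms(2) by (intro mult_left_mono) auto
  moreover have "real N * (real N + 1) \<le> real s * (real N * (real N + 1))"
    using assms(1) mult_right_mono[of 1 "real s" "real N * (real N + 1)"] by simp
  ultimately show ?thesis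
    by linarith
qed

lemma exists_tilted_mean_eq:
  assumes "1 \<le> s" "25 \<le> N" and M: "0 < M" "M \<le> real N"
  obtains x where "0 \<le> x" "1 / (10 * sqrt (real N)) \<le> 1 - x" "tilted_mean x (cells s N) = real N - M / 2"
proof -
  have "continuous_on {0..1} (\<lambda>x. tilted_mean x (cells s N))"
    unfolding tilted_mean_cells
    by (intro continuous_intros) (auto simp: add_nonneg_eq_0_iff)
  moreover have "tilted_mean 0 (cells s N) = 0"
    by (simp add: tilted_mean_cells)
  ultimately obtain x where x: "0 \<le> x" "x \<le> 1" and mean: "tilted_mean x (cells s N) = real N - M / 2"
    using IVT'[of "\<lambda>x. tilted_mean x (cells s N)" 0 "real N - M / 2" 1] tilted_mean_one_ge[of s N] assms
    by auto
  moreover have "1 / (10 * sqrt (real N)) \<le> 1 - x"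
    using tilted_mean_cells_near_one[OF assms(1,2) _ x(2)] mean M
    by (cases "1 / (10 * sqrt (real N)) \<le> 1 - x") auto
  ultimately show ?thesis
    using that by blast
qed

lemma cube_inverse_one_minus_le:
  fixes x :: real
  assumes "1 \<le> N" "x < 1" and gap: "1 / (10 * sqrt (real N)) \<le> 1 - x"
  shows "32 / (1 - x) ^ 3 \<le> 32000 * (real N * sqrt (real N))"
proof -
  have "1 / (1 - x) \<le> 10 * sqrt (real N)"
    using assms by (simp add: field_simps)
  then have "(1 / (1 - x)) ^ 3 \<le> (10 * sqrt (real N)) ^ 3"
    using assms by (intro power_mono) auto
  then show ?thesis
    by (simp add: power_divide power3_eq_cube)
qed

lemma exists_tilt:
  assumes "1 \<le> s" "25 \<le> N" "32 * real s \<le> real N" and M: "0 < M" "M \<le> real N"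
    and MV: "256000 * real s * (real N * sqrt (real N)) \<le> M ^ 2"
  obtains x where "1 / 2 \<le> x" "x < 1"
    "1 / (10 * sqrt (real N)) \<le> 1 - x" "1 - x \<le> sqrt (8 * real s / real N)"
    "tilted_mean x (cells s N) = real N - M / 2" "tilted_var x (cells s N) \<le> M ^ 2 / 8"
proof -
  obtain x where x: "0 \<le> x" and gap: "1 / (10 * sqrt (real N)) \<le> 1 - x"
    and mean: "tilted_mean x (cells s N) = real N - M / 2"
    using exists_tilted_mean_eq[OF assms(1,2) M] by blast
  have N: "0 < real N"
    using assms(2) by simp
  from gap have "x < 1"
    using N by (smt (verit) divide_pos_pos real_sqrt_gt_zero)
  have "real N / 2 \<le> real s * (4 / (1 - x) ^ 2)"
    using tilted_mean_cells_le[OF x \<open>x < 1\<close>, of s N] mean M by simp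
  then have "(1 - x) ^ 2 \<le> 8 * real s / real N"
    using \<open>x < 1\<close> N by (simp add: field_simps)
  then have up: "1 - x \<le> sqrt (8 * real s / real N)"
    by (rule real_le_rsqrt)
  also have "\<dots> \<le> sqrt (1 / 4)"
    using assms(3) N by (intro real_sqrt_le_mono) (simp add: field_simps)
  finally have "1 / 2 \<le> x"
    by (simp add: real_sqrt_divide)
  have "real s * (32 / (1 - x) ^ 3) \<le> real s * (32000 * (real N * sqrt (real N)))"
    using cube_inverse_one_minus_le[OF _ \<open>x < 1\<close> gap] assms(2) by (intro mult_left_mono) auto
  then have "tilted_var x (cells s N) \<le> M ^ 2 / 8"
    using tilted_var_cells_le[OF x \<open>x < 1\<close>, of s N] MV by simp
  then show ?thesis
    using that \<open>1 / 2 \<le> x\<close> \<open>x < 1\<close> gap up mean by blast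
qed

section \<open>Lower bounds for the total gain\<close>

lemma one_minus_exp_ge:
  fixes z :: real
  assumes "0 \<le> z"
  shows "z - z ^ 2 \<le> 1 - exp (- z)"
proof -
  have "exp (- z) \<le> 1 / (1 + z)"
    using exp_ge_add_one_self[of z] assms by (simp add: exp_minus field_simps)
  moreover have "(z - z ^ 2) * (1 + z) \<le> z"
    using assms by (simp add: algebra_simps power2_eq_square)
  then have "z - z ^ 2 \<le> 1 - 1 / (1 + z)"
    using assms by (simp add: field_simps)
  ultimately show ?thesis
    by linarith
qed

lemma power_le_exp:
  fixes x :: real
  assumes "0 \<le> x"
  shows "x ^ l \<le> exp (- (1 - x) * real l)"
proof -
  have "x ^ l \<le> exp (- (1 - x)) ^ l"
    using assms exp_ge_add_one_self[of "- (1 - x)"] by (intro power_mono) auto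
  then show ?thesis
    by (simp add: exp_of_nat_mult[symmetric] mult.commute)
qed

subsection \<open>Small \<open>m\<close>: a second order expansion in \<open>y\<close>\<close>

lemma gain_ge_quadratic:
  assumes x: "0 \<le> x" "x \<le> 1" and m: "2 \<le> m" and c: "0 \<le> c"
  shows "2 * c * real l * (occupancy x l * (1 - occupancy x l)) - 2 * c ^ 2 * real l ^ 2 * x ^ l
           \<le> gain x (exp (- c)) m l"
proof -
  define p where "p = occupancy x l"
  have p: "0 \<le> p" "p \<le> x ^ l" "p \<le> 1 / 2"
    using occupancy_bounds[OF x] by (simp_all add: p_def)
  have t: "(1 - x ^ l) / (1 + x ^ l) = 1 - 2 * p"
    using x by (simp add: p_def ratio_eq_one_minus_occupancy)
  have "(1 - 2 * p) ^ m \<le> (1 - 2 * p) ^ 2"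
    using p m by (intro power_decreasing) auto
  then have t_m: "4 * (p * (1 - p)) \<le> 1 - (1 - 2 * p) ^ m"
    by (simp add: algebra_simps power2_eq_square)
  have e: "exp (- c) ^ l = exp (- (c * real l))"
    by (simp add: exp_of_nat_mult[symmetric] mult.commute)
  have "2 * (c * real l - (c * real l) ^ 2) * (p * (1 - p))
      \<le> 2 * (1 - exp (- c) ^ l) * (p * (1 - p))"
    unfolding e using c p by (intro mult_right_mono mult_left_mono one_minus_exp_ge) auto
  also have "\<dots> = (1 - exp (- c) ^ l) * (4 * (p * (1 - p))) / 2"
    by (simp add: algebra_simps)
  also have "\<dots> \<le> (1 - exp (- c) ^ l) * (1 - (1 - 2 * p) ^ m) / 2"
    using t_m c by (intro divide_right_mono mult_left_mono) (auto simp: e)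
  finally have "2 * (c * real l - (c * real l) ^ 2) * (p * (1 - p)) \<le> gain x (exp (- c)) m l"
    by (simp add: gain_def t)
  moreover have "p * (1 - p) \<le> x ^ l"
    using p mult_left_mono[of "1 - p" 1 p] by simp
  then have "2 * c ^ 2 * real l ^ 2 * (p * (1 - p)) \<le> 2 * c ^ 2 * real l ^ 2 * x ^ l"
    by (intro mult_left_mono) auto
  ultimately show ?thesis
    by (simp add: p_def algebra_simps power2_eq_square)
qed

definition tau :: "nat \<Rightarrow> real" where
  "tau s = (1 - exp (- 1 / (20 * sqrt (real s)))) / 2"

lemma tau_bounds: "1 \<le> s \<Longrightarrow> 0 < tau s \<and> tau s \<le> 1 / 2"
  by (simp add: tau_def)

lemma sum_small_levels_le:
  fixes T :: real
  assumes "1 \<le> T"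
  shows "(\<Sum>l\<in>{1..N}. if real l < T then real l else 0) \<le> T * T"
proof -
  define F where "F = nat \<lfloor>T\<rfloor>"
  have F: "real F \<le> T"
    using assms by (simp add: F_def)
  have "(\<Sum>l\<in>{1..N}. if real l < T then real l else 0) = (\<Sum>l\<in>{l\<in>{1..N}. real l < T}. real l)"
    by (rule sum.inter_filter[symmetric]) simp
  also have "\<dots> \<le> (\<Sum>l\<in>{1..F}. real l)"
    by (intro sum_mono2) (auto simp: F_def le_nat_floor)
  also have "\<dots> = real F * (real F + 1) / 2"
    using double_gauss_sum_from_Suc_0[of F, where 'a = real] by simp
  also have "\<dots> \<le> T * (T + 1) / 2"
    using F assms by (intro divide_right_mono mult_mono) auto
  also have "\<dots> \<le> T * T"
    using mult_left_mono[of 1 T T] assms by (simp add: algebra_simps)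
  finally show ?thesis .
qed

lemma tau_le_one_minus_two_occupancy:
  assumes s: "1 \<le> s" and N: "4 * real s \<le> real N"
    and x: "1 / 2 \<le> x" "x < 1" and gap: "1 / (10 * sqrt (real N)) \<le> 1 - x"
    and l: "sqrt (real N) / (2 * sqrt (real s)) \<le> real l"
  shows "tau s \<le> 1 - 2 * occupancy x l"
proof -
  have "1 / (20 * sqrt (real s)) = 1 / (10 * sqrt (real N)) * (sqrt (real N) / (2 * sqrt (real s)))"
    using s N by (simp add: field_simps)
  also have "\<dots> \<le> (1 - x) * real l"
    using gap l x by (intro mult_mono) auto
  finally have "exp (- (1 - x) * real l) \<le> exp (- 1 / (20 * sqrt (real s)))"
    by (simp add: algebra_simps)
  with power_le_exp[of x l] x have "x ^ l \<le> exp (- 1 / (20 * sqrt (real s)))"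
    by (meson order_trans less_le_trans zero_less_divide_1_iff zero_less_numeral less_imp_le)
  moreover have "(1 - x ^ l) / 2 \<le> (1 - x ^ l) / (1 + x ^ l)"
    using x by (intro divide_left_mono) (auto simp: power_le_one add_pos_nonneg)
  then have "(1 - x ^ l) / 2 \<le> 1 - 2 * occupancy x l"
    using x ratio_eq_one_minus_occupancy[of x l] by simp
  ultimately show ?thesis
    by (simp add: tau_def)
qed

text \<open>Levels above \<open>sqrt N / (2 * sqrt s)\<close> have occupancy bounded away from \<open>1 / 2\<close>; below
  that level the total height is only \<open>N / (4 * s)\<close>.\<close>

lemma tau_mult_tilted_mean_le:
  assumes s: "1 \<le> s" and N: "4 * real s \<le> real N"
    and x: "1 / 2 \<le> x" "x < 1" and gap: "1 / (10 * sqrt (real N)) \<le> 1 - x"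
  shows "tau s * (tilted_mean x (cells s N) - real N / 8)
           \<le> real s * (\<Sum>l\<in>{1..N}. real l * occupancy x l * (1 - 2 * occupancy x l))"
proof -
  define p where "p = occupancy x"
  define T where "T = sqrt (real N) / (2 * sqrt (real s))"
  have p: "0 \<le> p l" "p l \<le> 1 / 2" for l
    using occupancy_bounds[of x l] x by (simp_all add: p_def)
  have tau: "0 < tau s" "tau s \<le> 1 / 2"
    using tau_bounds[OF s] by auto
  have "sqrt (4 * real s) \<le> sqrt (real N)"
    using N by simp
  then have T: "1 \<le> T" and sT: "real s * (T * T) = real N / 4"
    using s by (simp_all add: T_def real_sqrt_mult field_simps)
  have termwise: "tau s * (real l * p l) - tau s / 2 * (if real l < T then real l else 0)
      \<le> real l * p l * (1 - 2 * p l)" for l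
  proof (cases "real l < T")
    case True
    have "tau s * (real l * p l) \<le> tau s * (real l / 2)"
      using p[of l] tau mult_left_mono[of "p l" "1 / 2" "real l"] by (intro mult_left_mono) auto
    moreover have "0 \<le> real l * p l * (1 - 2 * p l)"
      using p[of l] by simp
    ultimately show ?thesis
      using True by simp
  next
    case False
    then have "tau s * (real l * p l) \<le> (1 - 2 * p l) * (real l * p l)"
      using tau_le_one_minus_two_occupancy[OF s N x gap, of l] p[of l]
      by (intro mult_right_mono) (auto simp: T_def p_def)
    then show ?thesis
      using False by (simp add: mult_ac)
  qed
  have "tau s * (\<Sum>l\<in>{1..N}. real l * p l) - tau s / 2 * (\<Sum>l\<in>{1..N}. if real l < T then real l else 0)
      \<le> (\<Sum>l\<in>{1..N}. real l * p l * (1 - 2 * p l))"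
    using sum_mono[of "{1..N}", OF termwise] by (simp add: sum_subtractf sum_distrib_left)
  moreover have "tau s / 2 * (\<Sum>l\<in>{1..N}. if real l < T then real l else 0) \<le> tau s / 2 * (T * T)"
    using sum_small_levels_le[OF T, of N] tau by (intro mult_left_mono) auto
  ultimately have "tau s * (\<Sum>l\<in>{1..N}. real l * p l) - tau s / 2 * (T * T)
      \<le> (\<Sum>l\<in>{1..N}. real l * p l * (1 - 2 * p l))"
    by linarith
  then have "real s * (tau s * (\<Sum>l\<in>{1..N}. real l * p l) - tau s / 2 * (T * T))
      \<le> real s * (\<Sum>l\<in>{1..N}. real l * p l * (1 - 2 * p l))"
    by (rule mult_left_mono) simp
  moreover have "real s * (tau s * (\<Sum>l\<in>{1..N}. real l * p l) - tau s / 2 * (T * T))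
      = tau s * (tilted_mean x (cells s N) - real N / 8)"
    using sT by (simp add: tilted_mean_cells_occupancy p_def algebra_simps)
  ultimately show ?thesis
    by (simp add: p_def)
qed

lemma tilted_mean_first_order:
  assumes s: "1 \<le> s" and N: "4 * real s \<le> real N"
    and x: "1 / 2 \<le> x" "x < 1" and gap: "1 / (10 * sqrt (real N)) \<le> 1 - x"
    and mean: "real N / 2 \<le> tilted_mean x (cells s N)"
  shows "tilted_mean x (cells s N) * (1 + tau s / 2)
           \<le> real s * (\<Sum>l\<in>{1..N}. 2 * real l * (occupancy x l * (1 - occupancy x l)))"
proof -
  define p where "p = occupancy x"
  have "(\<Sum>l\<in>{1..N}. 2 * real l * (p l * (1 - p l)))
      = (\<Sum>l\<in>{1..N}. real l * p l) + (\<Sum>l\<in>{1..N}. real l * p l * (1 - 2 * p l))"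
    by (simp add: sum.distrib[symmetric] algebra_simps)
  then have "real s * (\<Sum>l\<in>{1..N}. 2 * real l * (p l * (1 - p l)))
      = tilted_mean x (cells s N) + real s * (\<Sum>l\<in>{1..N}. real l * p l * (1 - 2 * p l))"
    by (simp add: tilted_mean_cells_occupancy p_def distrib_left)
  moreover have "tau s * (tilted_mean x (cells s N) / 2) \<le> tau s * (tilted_mean x (cells s N) - real N / 8)"
    using mean tau_bounds[OF s] by (intro mult_left_mono) auto
  ultimately show ?thesis
    using tau_mult_tilted_mean_le[OF s N x gap] by (simp add: p_def algebra_simps)
qed

lemma sum_sq_mult_power_le_gap:
  fixes x :: real
  assumes "1 \<le> N" "0 \<le> x" "x < 1" and gap: "1 / (10 * sqrt (real N)) \<le> 1 - x"
  shows "(\<Sum>l\<in>{1..N}. real l ^ 2 * x ^ l) \<le> 32000 * sqrt (real N) ^ 3"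
  using sum_sq_mult_power_le[of x N] cube_inverse_one_minus_le[OF assms(1,3) gap] assms(2,3)
  by (simp add: power3_eq_cube)

lemma gain_sum_ge_small_m:
  assumes s: "1 \<le> s" and N: "4 * real s \<le> real N" "1 \<le> N"
    and x: "1 / 2 \<le> x" "x < 1" and gap: "1 / (10 * sqrt (real N)) \<le> 1 - x"
    and mean: "tilted_mean x (cells s N) = real N - M / 2" and M: "0 \<le> M" "M \<le> real N"
    and m: "2 \<le> m" and b: "0 \<le> b"
  shows "b * sqrt (real N) * (1 + tau s / 2) - b * M / sqrt (real N) - 64000 * real s * b ^ 2 * sqrt (real N)
           \<le> real s * (\<Sum>l\<in>{1..N}. gain x (exp (- b / sqrt (real N))) m l)"
proof -
  define q where "q = sqrt (real N)"
  define c where "c = b / q"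
  define F where "F = (\<Sum>l\<in>{1..N}. 2 * real l * (occupancy x l * (1 - occupancy x l)))"
  have q: "1 \<le> q" "q * q = real N"
    using N by (simp_all add: q_def)
  have c: "0 \<le> c"
    using b q by (simp add: c_def)
  have tau: "0 < tau s" "tau s \<le> 1 / 2"
    using tau_bounds[OF s] by auto
  have sq: "(\<Sum>l\<in>{1..N}. real l ^ 2 * x ^ l) \<le> 32000 * q ^ 3"
    unfolding q_def using N(2) x gap by (intro sum_sq_mult_power_le_gap) auto
  have "c * F - 2 * c ^ 2 * (\<Sum>l\<in>{1..N}. real l ^ 2 * x ^ l)
      \<le> (\<Sum>l\<in>{1..N}. gain x (exp (- c)) m l)"
    using gain_ge_quadratic[of x m c] x m c
    by (simp add: F_def sum_distrib_left sum_subtractf[symmetric] sum_mono mult_ac)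
  then have first: "real s * (c * F) - real s * (2 * c ^ 2 * (\<Sum>l\<in>{1..N}. real l ^ 2 * x ^ l))
      \<le> real s * (\<Sum>l\<in>{1..N}. gain x (exp (- c)) m l)"
    by (simp add: mult_left_mono right_diff_distrib[symmetric])
  have quadratic: "2 * c ^ 2 * (\<Sum>l\<in>{1..N}. real l ^ 2 * x ^ l) \<le> 64000 * b ^ 2 * q"
    using mult_left_mono[OF sq, of "2 * c ^ 2"] q N(2)
    by (simp add: c_def power2_eq_square power3_eq_cube)
  then have second: "real s * (2 * c ^ 2 * (\<Sum>l\<in>{1..N}. real l ^ 2 * x ^ l))
      \<le> 64000 * real s * b ^ 2 * q"
    using mult_left_mono[OF quadratic, of "real s"] by (simp add: mult_ac)
  have "b * q * (1 + tau s / 2) - b * M / q \<le> c * (tilted_mean x (cells s N) * (1 + tau s / 2))"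
  proof -
    have "c * (tilted_mean x (cells s N) * (1 + tau s / 2))
        = b * q * (1 + tau s / 2) - b / q * (M / 2) * (1 + tau s / 2)"
      using q(1) by (simp add: c_def mean field_simps q(2)[symmetric])
    moreover have "b / q * M * ((1 + tau s / 2) / 2) \<le> b / q * M * 1"
      using b M q tau by (intro mult_left_mono) auto
    ultimately show ?thesis
      by simp
  qed
  also have "c * (tilted_mean x (cells s N) * (1 + tau s / 2)) \<le> real s * (c * F)"
    using mult_left_mono[OF tilted_mean_first_order[OF s N(1) x gap], of c] mean M c
    by (simp add: F_def mult_ac)
  finally have linear: "b * q * (1 + tau s / 2) - b * M / q \<le> real s * (c * F)" .
  have exp_c: "exp (- b / q) = exp (- c)"
    by (simp add: c_def)
  show ?thesis
    using linear first second unfolding q_def[symmetric] exp_c by linarith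
qed

subsection \<open>Large \<open>m\<close>: levels where the gain is bounded below\<close>

lemma exp_minus_one_le_half: "exp (- 1 :: real) \<le> 1 / 2"
  using exp_ge_add_one_self[of "1 :: real"] by (simp add: exp_minus field_simps)

lemma gain_ge_one_eighth:
  assumes x: "0 \<le> x" "x \<le> 1" and c: "1 \<le> c * real l" and m: "1 \<le> real m * x ^ l"
  shows "1 / 8 \<le> gain x (exp (- c)) m l"
proof -
  have "exp (- c) ^ l = exp (- (c * real l))"
    by (simp add: exp_of_nat_mult[symmetric] mult.commute)
  also have "\<dots> \<le> exp (- 1)"
    using c by simp
  also have "\<dots> \<le> 1 / 2"
    by (rule exp_minus_one_le_half)
  finally have y: "1 / 2 \<le> 1 - exp (- c) ^ l"
    by simp
  have "0 \<le> x ^ l" "x ^ l \<le> 1"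
    using x by (auto simp: power_le_one)
  then have "((1 - x ^ l) / (1 + x ^ l)) ^ m \<le> (1 - x ^ l) ^ m"
    using one_minus_div_one_plus_bounds[of "x ^ l"] by (intro power_mono) auto
  also have "\<dots> \<le> exp (- (x ^ l)) ^ m"
    using \<open>x ^ l \<le> 1\<close> exp_ge_add_one_self[of "- (x ^ l)"] by (intro power_mono) auto
  also have "\<dots> = exp (- (real m * x ^ l))"
    by (simp add: exp_of_nat_mult[symmetric])
  also have "\<dots> \<le> exp (- 1)"
    using m by simp
  also have "\<dots> \<le> 1 / 2"
    by (rule exp_minus_one_le_half)
  finally have "1 / 2 \<le> 1 - ((1 - x ^ l) / (1 + x ^ l)) ^ m"
    by simp
  then have "1 / 2 * (1 / 2) \<le> (1 - exp (- c) ^ l) * (1 - ((1 - x ^ l) / (1 + x ^ l)) ^ m)"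
    using y by (intro mult_mono) auto
  then show ?thesis
    by (simp add: gain_def)
qed

lemma card_nat_between_ge:
  fixes a b :: real
  assumes "1 \<le> a" "b \<le> real N"
  shows "b - a - 1 \<le> real (card {l\<in>{1..N}. a \<le> real l \<and> real l \<le> b})"
proof (cases "a \<le> b")
  case True
  have "{nat \<lceil>a\<rceil>..nat \<lfloor>b\<rfloor>} \<subseteq> {l\<in>{1..N}. a \<le> real l \<and> real l \<le> b}"
  proof
    fix l assume "l \<in> {nat \<lceil>a\<rceil>..nat \<lfloor>b\<rfloor>}"
    then have "a \<le> real l" "real l \<le> b"
      using assms True by auto linarith+
    then show "l \<in> {l\<in>{1..N}. a \<le> real l \<and> real l \<le> b}"
      using assms by auto
  qed
  then have "card {nat \<lceil>a\<rceil>..nat \<lfloor>b\<rfloor>} \<le> card {l\<in>{1..N}. a \<le> real l \<and> real l \<le> b}"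
    by (intro card_mono) auto
  moreover have "b - a - 1 \<le> real (card {nat \<lceil>a\<rceil>..nat \<lfloor>b\<rfloor>})"
    using assms True by simp linarith
  ultimately show ?thesis
    by linarith
qed simp

definition lam :: "nat \<Rightarrow> real" where
  "lam s = 2 * sqrt (8 * real s)"

lemma lam_ge_one:
  assumes "1 \<le> s"
  shows "1 \<le> lam s"
proof -
  have "1 \<le> sqrt (8 * real s)"
    using assms by simp
  then show ?thesis
    unfolding lam_def by linarith
qed

lemma one_le_mult_power:
  assumes s: "1 \<le> s" and N: "1 \<le> N" and x: "1 / 2 \<le> x" "x < 1"
    and up: "1 - x \<le> sqrt (8 * real s / real N)" and m: "2 \<le> m"
    and l: "real l \<le> ln (real m) / (2 * lam s) * sqrt (real N)"
  shows "1 \<le> real m * x ^ l"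
proof -
  have "exp (- 2 * (1 - x)) \<le> exp (ln x)"
    by (rule iffD2[OF exp_le_cancel_iff]) (use minus_two_mult_one_minus_le_ln[of x] x in simp)
  then have exp_le_x: "exp (- 2 * (1 - x)) \<le> x"
    using x by simp
  have "2 * (1 - x) * real l \<le> 2 * sqrt (8 * real s / real N) * (ln (real m) / (2 * lam s) * sqrt (real N))"
    using up l x by (intro mult_mono) auto
  also have "\<dots> = ln (real m) / 2"
    using N s by (simp add: lam_def real_sqrt_divide field_simps)
  finally have "exp (- (ln (real m) / 2)) \<le> exp (- 2 * (1 - x) * real l)"
    by (simp add: algebra_simps)
  also have "\<dots> = exp (- 2 * (1 - x)) ^ l"
    by (simp add: exp_of_nat_mult[symmetric] mult.commute)
  also have "\<dots> \<le> x ^ l"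
    using exp_le_x x by (intro power_mono) auto
  finally have "real m * exp (- (ln (real m) / 2)) \<le> real m * x ^ l"
    by (simp add: mult_left_mono)
  moreover have "exp (ln (real m) / 2) = exp (ln (real m)) * exp (- (ln (real m) / 2))"
    by (simp add: exp_add[symmetric])
  then have "exp (ln (real m) / 2) = real m * exp (- (ln (real m) / 2))"
    using m by simp
  moreover have "1 \<le> exp (ln (real m) / 2)"
    using m by simp
  ultimately show ?thesis
    by linarith
qed

lemma ln_div_lam_mult_sqrt_le:
  assumes s: "1 \<le> s" and m: "2 \<le> m" "m \<le> N"
  shows "ln (real m) / (2 * lam s) * sqrt (real N) \<le> real N"
proof -
  define q where "q = sqrt (real N)"
  have q: "1 \<le> q" "q * q = real N"
    using m by (simp_all add: q_def)
  have lam: "1 \<le> lam s"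
    using lam_ge_one[OF s] .
  have "ln (real m) \<le> ln (real N)"
    using m by simp
  also have "\<dots> = 2 * ln q"
    using m by (simp add: q_def ln_sqrt)
  also have "\<dots> \<le> 2 * q"
    using q ln_le_minus_one[of q] by simp
  also have "\<dots> \<le> 2 * lam s * q"
    using lam q by (intro mult_right_mono) auto
  finally have "ln (real m) / (2 * lam s) \<le> q"
    using lam by (simp add: field_simps)
  then have "ln (real m) / (2 * lam s) * q \<le> q * q"
    using q by (intro mult_right_mono) auto
  then show ?thesis
    using q by (simp add: q_def)
qed

lemma gain_sum_ge_large_m:
  assumes s: "1 \<le> s" and N: "1 \<le> N" and x: "1 / 2 \<le> x" "x < 1"
    and up: "1 - x \<le> sqrt (8 * real s / real N)" and m: "2 \<le> m" "m \<le> N"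
  shows "(ln (real m) / (2 * lam s) * sqrt (real N) - sqrt (real N) - 1) / 8
           \<le> real s * (\<Sum>l\<in>{1..N}. gain x (exp (- 1 / sqrt (real N))) m l)"
proof -
  define q where "q = sqrt (real N)"
  define K where "K = ln (real m) / (2 * lam s) * q"
  define L where "L = {l\<in>{1..N}. q \<le> real l \<and> real l \<le> K}"
  have q: "1 \<le> q"
    using N by (simp add: q_def)
  have good: "1 / 8 \<le> gain x (exp (- 1 / q)) m l" if "l \<in> L" for l
  proof -
    have "1 \<le> 1 / q * real l"
      using that q by (simp add: L_def)
    moreover have "1 \<le> real m * x ^ l"
      using that by (intro one_le_mult_power[OF s N x up m(1)]) (simp add: L_def K_def q_def)
    ultimately show ?thesis
      using gain_ge_one_eighth[of x "1 / q" l m] x by simp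
  qed
  have card: "K - q - 1 \<le> real (card L)"
    unfolding L_def using ln_div_lam_mult_sqrt_le[OF s m]
    by (intro card_nat_between_ge[OF q]) (simp add: K_def q_def)
  have gain_nonneg: "0 \<le> gain x (exp (- 1 / q)) m l" for l
    using gain_bounds[of x "exp (- 1 / q)" m l] x q by simp
  have "real (card L) / 8 = (\<Sum>l\<in>L. 1 / 8)"
    by simp
  also have "\<dots> \<le> (\<Sum>l\<in>L. gain x (exp (- 1 / q)) m l)"
    using good by (rule sum_mono)
  also have "\<dots> \<le> (\<Sum>l\<in>{1..N}. gain x (exp (- 1 / q)) m l)"
    using gain_nonneg by (intro sum_mono2) (auto simp: L_def)
  also have "\<dots> \<le> real s * (\<Sum>l\<in>{1..N}. gain x (exp (- 1 / q)) m l)"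
    using s gain_nonneg by (intro mult_right_mono[of 1 "real s", simplified] sum_nonneg) auto
  finally have total: "real (card L) / 8 \<le> real s * (\<Sum>l\<in>{1..N}. gain x (exp (- 1 / q)) m l)" .
  have "(K - q - 1) / 8 \<le> real (card L) / 8"
    using card by (rule divide_right_mono) simp
  then show ?thesis
    unfolding q_def[symmetric] K_def[symmetric] using total by (rule order_trans)
qed

section \<open>The two regimes and the final estimate\<close>

lemma two_mult_one_minus_le_lam:
  assumes "1 - x \<le> sqrt (8 * real s / real N)" and "0 \<le> a"
  shows "2 * a * (1 - x) \<le> a * lam s / sqrt (real N)"
proof -
  have "2 * (1 - x) \<le> lam s / sqrt (real N)"
    using assms(1) by (simp add: lam_def real_sqrt_divide)
  then have "a * (2 * (1 - x)) \<le> a * (lam s / sqrt (real N))"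
    using assms(2) by (rule mult_left_mono)
  then show ?thesis
    by (simp add: algebra_simps)
qed

lemma xor_prob_le_small_m:
  assumes s: "1 \<le> s" and N: "1 \<le> N" "4 * real s \<le> real N" and x: "1 / 2 \<le> x" "x < 1"
    and gap: "1 / (10 * sqrt (real N)) \<le> 1 - x" and up: "1 - x \<le> sqrt (8 * real s / real N)"
    and mean: "tilted_mean x (cells s N) = real N - M / 2"
    and var: "tilted_var x (cells s N) \<le> M ^ 2 / 8" and M: "0 < M" "M \<le> real N"
    and r: "2 \<le> r" and b: "b = tau s / (256000 * real s)"
  shows "xor_prob s N r \<le> exp (real r * ln 4 + real r * M * lam s / sqrt (real N)
           - b * tau s * sqrt (real N) / 4 + b * M / sqrt (real N))"
proof -
  define G where "G = real s * (\<Sum>l\<in>{1..N}. gain x (exp (- b / sqrt (real N))) r l)"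
  have b0: "0 \<le> b"
    using tau_bounds[OF s] b by simp
  have "b * sqrt (real N) * (1 + tau s / 2) - b * M / sqrt (real N) - 64000 * real s * b ^ 2 * sqrt (real N)
      \<le> G"
    unfolding G_def using gain_sum_ge_small_m[OF s N(2,1) x gap mean] M r b0 by simp
  moreover have "64000 * real s * b ^ 2 * sqrt (real N) = b * tau s * sqrt (real N) / 4"
    using s by (simp add: b power2_eq_square field_simps)
  moreover have "b * sqrt (real N) * (1 + tau s / 2) = b * sqrt (real N) + 2 * (b * tau s * sqrt (real N) / 4)"
    by (simp add: algebra_simps)
  moreover have "2 * real r * M * (1 - x) \<le> real r * M * lam s / sqrt (real N)"
    using two_mult_one_minus_le_lam[OF up, of "real r * M"] M by simp
  ultimately have "real r * ln 4 + 2 * real r * M * (1 - x) + b * sqrt (real N) - G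
      \<le> real r * ln 4 + real r * M * lam s / sqrt (real N) - b * tau s * sqrt (real N) / 4 + b * M / sqrt (real N)"
    by linarith
  then show ?thesis
    using xor_prob_le_exp_gain[OF s N(1) x b0 M(1) mean var, of r r] unfolding G_def
    by (meson exp_le_cancel_iff order.trans order_refl)
qed

lemma xor_prob_le_large_m:
  assumes s: "1 \<le> s" and N: "1 \<le> N" and x: "1 / 2 \<le> x" "x < 1"
    and up: "1 - x \<le> sqrt (8 * real s / real N)"
    and mean: "tilted_mean x (cells s N) = real N - M / 2"
    and var: "tilted_var x (cells s N) \<le> M ^ 2 / 8" and M: "0 < M"
    and m: "2 \<le> m" "m \<le> r" "m \<le> N"
  shows "xor_prob s N r \<le> exp (real m * ln 4 + real m * M * lam s / sqrt (real N)
           + 9 / 8 * sqrt (real N) + 1 / 8 - ln (real m) * sqrt (real N) / (16 * lam s))"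
proof -
  define G where "G = real s * (\<Sum>l\<in>{1..N}. gain x (exp (- 1 / sqrt (real N))) m l)"
  have "(ln (real m) / (2 * lam s) * sqrt (real N) - sqrt (real N) - 1) / 8 \<le> G"
    unfolding G_def using gain_sum_ge_large_m[OF s N x up m(1,3)] .
  moreover have "2 * real m * M * (1 - x) \<le> real m * M * lam s / sqrt (real N)"
    using two_mult_one_minus_le_lam[OF up, of "real m * M"] M by simp
  moreover have "(ln (real m) / (2 * lam s) * sqrt (real N) - sqrt (real N) - 1) / 8
      = ln (real m) * sqrt (real N) / (16 * lam s) - sqrt (real N) / 8 - 1 / 8"
    by (simp add: field_simps)
  ultimately have "real m * ln 4 + 2 * real m * M * (1 - x) + 1 * sqrt (real N) - G
      \<le> real m * ln 4 + real m * M * lam s / sqrt (real N)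
           + 9 / 8 * sqrt (real N) + 1 / 8 - ln (real m) * sqrt (real N) / (16 * lam s)"
    by linarith
  then show ?thesis
    using xor_prob_le_exp_gain[OF s N x _ M mean var m(2), of 1] unfolding G_def
    by (meson exp_le_cancel_iff order.trans zero_le_one)
qed

lemma xor_prob_le_small_r_large_N:
  assumes s: "1 \<le> s" and N: "25 \<le> N" "32 * real s \<le> real N"
    and M: "0 < M" "M \<le> real N" "256000 * real s * (real N * sqrt (real N)) \<le> M ^ 2"
    and r: "2 \<le> r" "r \<le> m0" and b: "b = tau s / (256000 * real s)"
    and large: "real m0 * ln 4 + real m0 * lam s * (M / sqrt (real N)) + b * (M / sqrt (real N))
                  \<le> b * tau s * sqrt (real N) / 8"
    and B: "0 \<le> B" "B * ln (real m0) \<le> b * tau s / 8"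
  shows "xor_prob s N r \<le> exp (- (B * sqrt (real N) * ln (real r)))"
proof -
  obtain x where x: "1 / 2 \<le> x" "x < 1" and gap: "1 / (10 * sqrt (real N)) \<le> 1 - x"
    and up: "1 - x \<le> sqrt (8 * real s / real N)"
    and mean: "tilted_mean x (cells s N) = real N - M / 2" and var: "tilted_var x (cells s N) \<le> M ^ 2 / 8"
    using exists_tilt[OF s N M] by blast
  have "real r * ln 4 + real r * lam s * (M / sqrt (real N))
      \<le> real m0 * ln 4 + real m0 * lam s * (M / sqrt (real N))"
    using r M lam_ge_one[OF s] by (intro add_mono mult_right_mono) auto
  moreover have "B * ln (real r) \<le> B * ln (real m0)"
    using r B by (intro mult_left_mono) auto
  then have "B * ln (real r) * sqrt (real N) \<le> b * tau s / 8 * sqrt (real N)"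
    using B(2) by (intro mult_right_mono) auto
  moreover have "real r * M * lam s / sqrt (real N) = real r * lam s * (M / sqrt (real N))"
    and "b * M / sqrt (real N) = b * (M / sqrt (real N))"
    and "b * tau s / 8 * sqrt (real N) = b * tau s * sqrt (real N) / 8"
    and "B * ln (real r) * sqrt (real N) = B * sqrt (real N) * ln (real r)"
    by simp_all
  ultimately have exponent: "real r * ln 4 + real r * M * lam s / sqrt (real N)
      - b * tau s * sqrt (real N) / 4 + b * M / sqrt (real N) \<le> - (B * sqrt (real N) * ln (real r))"
    using large by linarith
  have "1 \<le> N" "4 * real s \<le> real N"
    using N by simp_all
  then show ?thesis
    by (rule order.trans[OF xor_prob_le_small_m[OF s _ _ x gap up mean var M(1,2) r(1) b]])
      (use exponent in simp)
qed

text \<open>For large \<open>r\<close> only \<open>m = min r (N powr (1 / 8))\<close> convolution steps are bounded by Rankin's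
  trick; this keeps the loss \<open>m * M / sqrt N\<close> below \<open>sqrt N\<close> while \<open>ln m\<close> is still of order \<open>ln r\<close>.\<close>

lemma exists_step_count:
  assumes r: "m0 \<le> r" "r < N" and m0: "3 \<le> m0"
    and N: "real m0 + 1 \<le> real N powr (1 / 8)" "real N powr (1 / 16) + 1 \<le> real N powr (1 / 8)"
  obtains m where "m0 \<le> m" "m \<le> r" "m \<le> N" "real m \<le> real N powr (1 / 8)"
    "ln (real r) / 16 \<le> ln (real m)"
proof
  define m where "m = min r (nat \<lfloor>real N powr (1 / 8)\<rfloor>)"
  have floor: "real N powr (1 / 8) - 1 \<le> real (nat \<lfloor>real N powr (1 / 8)\<rfloor>)"
    "real (nat \<lfloor>real N powr (1 / 8)\<rfloor>) \<le> real N powr (1 / 8)"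
    by (linarith, simp add: floor_le_iff)
  moreover have "m \<le> nat \<lfloor>real N powr (1 / 8)\<rfloor>"
    by (simp add: m_def)
  ultimately show "real m \<le> real N powr (1 / 8)"
    by linarith
  have "real m0 \<le> real (nat \<lfloor>real N powr (1 / 8)\<rfloor>)"
    using N(1) floor(1) by linarith
  then show m: "m0 \<le> m" "m \<le> r" "m \<le> N"
    using r by (auto simp: m_def)
  show "ln (real r) / 16 \<le> ln (real m)"
  proof (cases "m = r")
    case True
    then show ?thesis
      using r m0 by simp
  next
    case False
    then have "m = nat \<lfloor>real N powr (1 / 8)\<rfloor>"
      by (simp add: m_def min_def split: if_splits)
    then have "real N powr (1 / 16) \<le> real m"
      using N(2) floor(1) by linarith
    then have "ln (real N powr (1 / 16)) \<le> ln (real m)"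
      using r m m0 by (subst ln_le_cancel_iff) auto
    moreover have "ln (real r) \<le> ln (real N)"
      using r m m0 by simp
    ultimately show ?thesis
      using r by (simp add: ln_powr)
  qed
qed

lemma xor_prob_le_large_r_large_N:
  assumes s: "1 \<le> s" and N: "25 \<le> N" "32 * real s \<le> real N"
    and M: "0 < M" "M \<le> real N" "256000 * real s * (real N * sqrt (real N)) \<le> M ^ 2"
    and r: "m0 \<le> r" "r < N" and m0: "3 \<le> m0" "36 * lam s \<le> ln (real m0)"
    and large: "real N powr (1 / 8) * (lam s * (M / sqrt (real N)) + ln 4) \<le> sqrt (real N) / (64 * lam s)"
      "real m0 + 1 \<le> real N powr (1 / 8)" "real N powr (1 / 16) + 1 \<le> real N powr (1 / 8)"
    and B: "0 \<le> B" "B \<le> 1 / (1024 * lam s)"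
  shows "xor_prob s N r \<le> exp (1 / 8 - B * sqrt (real N) * ln (real r))"
proof -
  obtain x where x: "1 / 2 \<le> x" "x < 1" and up: "1 - x \<le> sqrt (8 * real s / real N)"
    and mean: "tilted_mean x (cells s N) = real N - M / 2" and var: "tilted_var x (cells s N) \<le> M ^ 2 / 8"
    using exists_tilt[OF s N M] by blast
  obtain m where m: "m0 \<le> m" "m \<le> r" "m \<le> N" and m_le: "real m \<le> real N powr (1 / 8)"
    and ln_r: "ln (real r) / 16 \<le> ln (real m)"
    using exists_step_count[OF r m0(1) large(2,3)] by blast
  have lam: "1 \<le> lam s"
    using lam_ge_one[OF s] .
  have sqrtN: "0 < sqrt (real N)"
    using N by simp
  have "ln (real m0) \<le> ln (real m)"
    using m m0 by simp
  then have ln_m: "36 * lam s \<le> ln (real m)"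
    using m0 by linarith
  have "real m * (lam s * (M / sqrt (real N)) + ln 4)
      \<le> real N powr (1 / 8) * (lam s * (M / sqrt (real N)) + ln 4)"
    using m_le lam M by (intro mult_right_mono) auto
  also have "\<dots> \<le> ln (real m) * sqrt (real N) / (64 * lam s)"
    using large(1) ln_m lam sqrtN divide_right_mono[of "sqrt (real N)" "ln (real m) * sqrt (real N)" "64 * lam s"]
    by (simp add: mult_le_cancel_right1)
  finally have t1: "real m * ln 4 + real m * M * lam s / sqrt (real N) \<le> ln (real m) * sqrt (real N) / (64 * lam s)"
    by (simp add: algebra_simps)
  have "9 / 8 \<le> ln (real m) / (32 * lam s)"
    using ln_m lam by (simp add: field_simps)
  then have t2: "9 / 8 * sqrt (real N) \<le> ln (real m) * sqrt (real N) / (32 * lam s)"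
    using sqrtN mult_right_mono[of "9 / 8" "ln (real m) / (32 * lam s)" "sqrt (real N)"] by simp
  have t3: "B * sqrt (real N) * ln (real r) \<le> ln (real m) * sqrt (real N) / (64 * lam s)"
    using ln_r B lam sqrtN r m m0
      mult_mono[of B "1 / (1024 * lam s)" "sqrt (real N) * ln (real r)" "16 * (sqrt (real N) * ln (real m))"]
    by (simp add: field_simps)
  have "ln (real m) * sqrt (real N) / (16 * lam s) = ln (real m) * sqrt (real N) / (64 * lam s)
      + ln (real m) * sqrt (real N) / (32 * lam s) + ln (real m) * sqrt (real N) / (64 * lam s)"
    by (simp add: field_simps)
  then have exponent: "real m * ln 4 + real m * M * lam s / sqrt (real N) + 9 / 8 * sqrt (real N) + 1 / 8
      - ln (real m) * sqrt (real N) / (16 * lam s) \<le> 1 / 8 - B * sqrt (real N) * ln (real r)"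
    using t1 t2 t3 by linarith
  have "1 \<le> N" "2 \<le> m"
    using N m m0 by simp_all
  then show ?thesis
    by (rule order.trans[OF xor_prob_le_large_m[OF s _ x up mean var M(1) _ m(2,3)]])
      (use exponent in simp)
qed

text \<open>The constants of the final estimate: \<open>M = width s * N powr (3 / 4)\<close> is the distance of the
  tilted mean below \<open>N\<close>, \<open>y = exp (- beta s / sqrt N)\<close> for \<open>r\<close> below \<open>threshold s\<close>, and \<open>rate s\<close>
  is the exponent \<open>B\<close>.\<close>

definition width :: "nat \<Rightarrow> real" where
  "width s = sqrt (256000 * real s)"

definition beta :: "nat \<Rightarrow> real" where
  "beta s = tau s / (256000 * real s)"

definition threshold :: "nat \<Rightarrow> nat" where
  "threshold s = nat \<lceil>exp (36 * lam s)\<rceil> + 3"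

definition rate :: "nat \<Rightarrow> real" where
  "rate s = min (beta s * tau s / (8 * ln (real (threshold s)))) (1 / (1024 * lam s))"

lemma threshold_bounds: "1 \<le> s \<Longrightarrow> 3 \<le> threshold s \<and> 36 * lam s \<le> ln (real (threshold s))"
proof -
  have "exp (36 * lam s) \<le> real (threshold s)"
    unfolding threshold_def by linarith
  then show "3 \<le> threshold s \<and> 36 * lam s \<le> ln (real (threshold s))"
    by (metis exp_gt_zero exp_le_cancel_iff exp_ln less_le_trans threshold_def le_add2)
qed

lemma rate_bounds:
  assumes "1 \<le> s"
  shows "0 < rate s" "rate s * ln (real (threshold s)) \<le> beta s * tau s / 8" "rate s \<le> 1 / (1024 * lam s)"
proof -
  have "0 < ln (real (threshold s))"
    using threshold_bounds[OF assms] lam_ge_one[OF assms] by linarith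
  then show "0 < rate s" "rate s * ln (real (threshold s)) \<le> beta s * tau s / 8" "rate s \<le> 1 / (1024 * lam s)"
    using tau_bounds[OF assms] lam_ge_one[OF assms] assms
    by (auto simp: rate_def beta_def min_def field_simps)
qed

lemma eventually_large_N:
  assumes s: "1 \<le> s"
  shows "eventually (\<lambda>N::nat. 32 * real s + 25 \<le> real N
    \<and> width s * sqrt (real N * sqrt (real N)) \<le> real N
    \<and> real (threshold s) * ln 4 + (real (threshold s) * lam s + beta s) * width s * sqrt (sqrt (real N))
        \<le> beta s * tau s / 8 * sqrt (real N)
    \<and> real N powr (1 / 8) * (lam s * width s * sqrt (sqrt (real N)) + ln 4) \<le> sqrt (real N) / (64 * lam s)
    \<and> real (threshold s) + 1 \<le> real N powr (1 / 8)
    \<and> real N powr (1 / 16) + 1 \<le> real N powr (1 / 8)) at_top"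
proof -
  define K where "K = width s"
  define a where "a = (real (threshold s) * lam s + beta s) * width s"
  define c where "c = real (threshold s)"
  define e where "e = beta s * tau s / 8"
  define f where "f = lam s * width s"
  define g where "g = 1 / (64 * lam s)"
  have pos: "0 < K" "0 < e" "0 < f" "0 < g"
    using s tau_bounds[OF s] lam_ge_one[OF s] by (simp_all add: K_def e_def f_def g_def width_def beta_def)
  have "eventually (\<lambda>N::nat. 32 * real s + 25 \<le> real N) at_top"
    by real_asymp
  moreover have "eventually (\<lambda>N::nat. K * sqrt (real N * sqrt (real N)) \<le> real N) at_top"
    using pos by real_asymp
  moreover have "eventually (\<lambda>N::nat. c * ln 4 + a * sqrt (sqrt (real N)) \<le> e * sqrt (real N)) at_top"
    using pos by real_asymp
  moreover have "eventually (\<lambda>N::nat. real N powr (1 / 8) * (f * sqrt (sqrt (real N)) + ln 4)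
      \<le> g * sqrt (real N)) at_top"
    using pos by real_asymp
  moreover have "eventually (\<lambda>N::nat. c + 1 \<le> real N powr (1 / 8)) at_top"
    by real_asymp
  moreover have "eventually (\<lambda>N::nat. real N powr (1 / 16) + 1 \<le> real N powr (1 / 8)) at_top"
    by real_asymp
  ultimately show ?thesis
    by eventually_elim (simp add: K_def a_def c_def e_def f_def g_def)
qed

lemma xor_prob_le_exp_large_N:
  assumes s: "1 \<le> s"
  obtains N0 where
    "\<And>N r. N0 \<le> N \<Longrightarrow> 2 \<le> r \<Longrightarrow> r < N \<Longrightarrow> xor_prob s N r \<le> exp (1 / 8 - rate s * sqrt (real N) * ln (real r))"
proof -
  obtain N0 where N0: "\<And>N. N0 \<le> N \<Longrightarrow> 32 * real s + 25 \<le> real N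
    \<and> width s * sqrt (real N * sqrt (real N)) \<le> real N
    \<and> real (threshold s) * ln 4 + (real (threshold s) * lam s + beta s) * width s * sqrt (sqrt (real N))
        \<le> beta s * tau s / 8 * sqrt (real N)
    \<and> real N powr (1 / 8) * (lam s * width s * sqrt (sqrt (real N)) + ln 4) \<le> sqrt (real N) / (64 * lam s)
    \<and> real (threshold s) + 1 \<le> real N powr (1 / 8)
    \<and> real N powr (1 / 16) + 1 \<le> real N powr (1 / 8)"
    using eventually_large_N[OF s] unfolding eventually_at_top_linorder by blast
  have "xor_prob s N r \<le> exp (1 / 8 - rate s * sqrt (real N) * ln (real r))"
    if "N0 \<le> N" "2 \<le> r" "r < N" for N r
  proof -
    define M where "M = width s * sqrt (real N * sqrt (real N))"
    note P = N0[OF that(1)]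
    have N: "25 \<le> N" "32 * real s \<le> real N"
      using P by auto
    have M: "0 < M" "M \<le> real N" "256000 * real s * (real N * sqrt (real N)) \<le> M ^ 2"
      using P s N by (auto simp: M_def width_def power_mult_distrib)
    have MN: "M / sqrt (real N) = width s * sqrt (sqrt (real N))"
      using N by (simp add: M_def real_sqrt_mult)
    show ?thesis
    proof (cases "r \<le> threshold s")
      case True
      have "real (threshold s) * ln 4 + real (threshold s) * lam s * (M / sqrt (real N)) + beta s * (M / sqrt (real N))
          \<le> beta s * tau s * sqrt (real N) / 8"
        using P by (simp add: MN algebra_simps)
      then have "xor_prob s N r \<le> exp (- (rate s * sqrt (real N) * ln (real r)))"
        using xor_prob_le_small_r_large_N[OF s N M that(2) True beta_def] rate_bounds[OF s] by simp
      then show ?thesis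
        by (rule order.trans) simp
    next
      case False
      then have "threshold s \<le> r"
        by simp
      then show ?thesis
        by (rule xor_prob_le_large_r_large_N[OF s N M _ that(3)])
          (use threshold_bounds[OF s] rate_bounds[OF s] P in \<open>simp_all add: MN mult.assoc\<close>)
    qed
  qed
  then show ?thesis
    using that by blast
qed

lemma xor_prob_le_one: "xor_prob s N r \<le> 1"
proof -
  define good where "good = {ks \<in> PiE {..<r} (\<lambda>_. QN s N). xsum s ks r \<in> QN s N}"
  have "card good \<le> card (PiE {..<r} (\<lambda>_. QN s N))"
    unfolding good_def by (rule card_mono) (simp_all add: finite_PiE finite_QN)
  then have "real (card good) \<le> real (card (QN s N)) ^ r"
    by (simp add: card_PiE flip: of_nat_power)
  moreover have "0 < real (card good) \<Longrightarrow> 0 < real (card (QN s N)) ^ r"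
    using calculation by linarith
  ultimately show ?thesis
    unfolding xor_prob_def good_def[symmetric] by (cases "card good = 0") (simp_all add: divide_le_eq_1)
qed

lemma sqrt_mult_ln_le:
  assumes "1 \<le> r" "N \<le> r"
  shows "sqrt (real N) * ln (real r) \<le> 2 * real r"
proof -
  have "ln (real r) = 2 * ln (sqrt (real r))"
    using assms by (simp add: ln_sqrt)
  also have "\<dots> \<le> 2 * sqrt (real r)"
    using assms ln_le_minus_one[of "sqrt (real r)"] by simp
  finally have ln_r: "ln (real r) \<le> 2 * sqrt (real r)" .
  have "sqrt (real N) * ln (real r) \<le> sqrt (real r) * (2 * sqrt (real r))"
  proof (rule mult_mono)
    show "sqrt (real N) \<le> sqrt (real r)"
      using assms(2) by simp
  qed (use assms ln_r in simp_all)
  also have "\<dots> = 2 * real r"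
    by (simp add: mult.left_commute)
  finally show ?thesis .
qed

text \<open>Outside the range of \<open>xor_prob_le_exp_large_N\<close>, the trivial bound \<open>xor_prob \<le> 1\<close> suffices.\<close>

lemma sqrt_mult_ln_le_linear:
  assumes "1 \<le> r" and "\<not> (N0 \<le> N \<and> r < N)"
  shows "sqrt (real N) * ln (real r) \<le> (2 + sqrt (real N0)) * real r"
proof -
  have split: "(2 + sqrt (real N0)) * real r = 2 * real r + sqrt (real N0) * real r"
    by (simp add: algebra_simps)
  have "0 \<le> sqrt (real N0) * real r"
    by simp
  show ?thesis
  proof (cases "N \<le> r")
    case True
    then show ?thesis
      using sqrt_mult_ln_le[OF assms(1) True] split \<open>0 \<le> sqrt (real N0) * real r\<close> by linarith
  next
    case False
    then have "N \<le> N0"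
      using assms(2) by simp
    then have "sqrt (real N) * ln (real r) \<le> sqrt (real N0) * real r"
      using assms(1) ln_le_minus_one[of "real r"] by (intro mult_mono) auto
    then show ?thesis
      using split assms(1) by linarith
  qed
qed

lemma xor_prob_le_exp_linear:
  assumes s: "1 \<le> s"
  obtains B c where "0 < B"
    "\<And>N r. 2 \<le> r \<Longrightarrow> xor_prob s N r \<le> exp (real r * c - B * sqrt (real N) * ln (real r))"
proof -
  obtain N0 where N0: "\<And>N r. N0 \<le> N \<Longrightarrow> 2 \<le> r \<Longrightarrow> r < N
      \<Longrightarrow> xor_prob s N r \<le> exp (1 / 8 - rate s * sqrt (real N) * ln (real r))"
    using xor_prob_le_exp_large_N[OF s] by blast
  define B where "B = rate s"
  define c where "c = 1 / 8 + B * (2 + sqrt (real N0))"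
  have B: "0 < B"
    using rate_bounds[OF s] by (simp add: B_def)
  have c: "1 / 8 \<le> c"
    using B by (simp add: c_def)
  have main: "xor_prob s N r \<le> exp (real r * c - B * sqrt (real N) * ln (real r))" if "2 \<le> r" for N r
  proof (cases "N0 \<le> N \<and> r < N")
    case True
    have "c \<le> real r * c"
      using that c by (simp add: mult_le_cancel_right1)
    then have "1 / 8 - B * sqrt (real N) * ln (real r) \<le> real r * c - B * sqrt (real N) * ln (real r)"
      using c by linarith
    then have "exp (1 / 8 - B * sqrt (real N) * ln (real r)) \<le> exp (real r * c - B * sqrt (real N) * ln (real r))"
      by simp
    moreover have "xor_prob s N r \<le> exp (1 / 8 - B * sqrt (real N) * ln (real r))"
      using N0[of N r] True that by (simp add: B_def)
    ultimately show ?thesis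
      by linarith
  next
    case False
    have "B * (sqrt (real N) * ln (real r)) \<le> B * ((2 + sqrt (real N0)) * real r)"
      using sqrt_mult_ln_le_linear[OF _ False] that B by (intro mult_left_mono) auto
    also have "\<dots> \<le> real r * c"
      by (simp add: c_def algebra_simps)
    finally have "1 \<le> exp (real r * c - B * sqrt (real N) * ln (real r))"
      by (simp add: mult.assoc)
    then show ?thesis
      using xor_prob_le_one[of s N r] by linarith
  qed
  show ?thesis
    using B main by (rule that)
qed

lemma exp_le_mult_powr_bound:
  assumes "1 \<le> N" "1 \<le> r"
  shows "exp (real r * c - B * sqrt (real N) * ln (real r))
           \<le> exp c ^ r * real N powr (real r / 4) * real r powr (- B * sqrt (real N))"
proof -
  have "exp (real r * c - B * sqrt (real N) * ln (real r)) = exp (real r * c) * exp (- B * sqrt (real N) * ln (real r))"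
    by (simp add: exp_add[symmetric])
  also have "\<dots> = exp c ^ r * real r powr (- B * sqrt (real N))"
    using assms by (simp add: exp_of_nat_mult powr_def)
  also have "\<dots> \<le> exp c ^ r * real N powr (real r / 4) * real r powr (- B * sqrt (real N))"
  proof -
    have "1 \<le> real N powr (real r / 4)"
      using assms by (simp add: ge_one_powr_ge_zero)
    then have "real r powr (- B * sqrt (real N)) \<le> real N powr (real r / 4) * real r powr (- B * sqrt (real N))"
      using mult_right_mono[of 1 "real N powr (real r / 4)" "real r powr (- B * sqrt (real N))"] by simp
    then show ?thesis
      by (simp add: mult_left_mono mult.assoc)
  qed
  finally show ?thesis .
qed

theorem lemma5:
  fixes s :: nat
  assumes "s \<ge> 1"
  shows "\<exists>A B :: real. A > 0 \<and> B > 0 \<and>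
           (\<forall>N r :: nat. N \<ge> 1 \<longrightarrow> r \<ge> 2 \<longrightarrow>
              xor_prob s N r \<le> A ^ r * real N powr (real r / 4) * real r powr (- B * sqrt (real N)))"
proof -
  obtain B c where B: "0 < B" and bound:
    "\<And>N r. 2 \<le> r \<Longrightarrow> xor_prob s N r \<le> exp (real r * c - B * sqrt (real N) * ln (real r))"
    using xor_prob_le_exp_linear[OF assms] by blast
  have "xor_prob s N r \<le> exp c ^ r * real N powr (real r / 4) * real r powr (- B * sqrt (real N))"
    if "N \<ge> 1" "r \<ge> 2" for N r :: nat
    using order_trans[OF bound[of r N] exp_le_mult_powr_bound[of N r c B]] that by simp
  then show ?thesis
    using B by (intro exI[of _ "exp c"] exI[of _ B]) simp
qed

end
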